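(* Let $\mathcal{I}$ be any one of $\mathcal{P}$, $\mathcal{P}_\infty$, $\mathcal{B}$. The class $\{\mu\in\mathcal{I}: B_{X_\mu}$ is dentable$\}$ is $F_{\sigma\delta}$ in $\mathcal{I}$.
   Context: Coding: $V$ is the set of finitely supported rational sequences; $\mathcal{P}\subset\mathbb{R}^V$ the seminorms on $V$ with pointwise convergence topology; for $\mu\in\mathcal{P}$, $\bar\mu$ is its seminorm extension to $c_{00}$ and $X_\mu$ the completion of $c_{00}/\{\bar\mu=0\}$; $\mathcal{P}_\infty=\{\mu:\dim X_\mu=\infty\}$, $\mathcal{B}=\{\mu\in\mathcal{P}_\infty:\bar\mu$ a norm on $c_{00}\}$, subspace topologies. The unit ball $B_X$ is dentable if it has slices $\{x\in B_X:f(x)>1-\alpha\}$ ($f\in S_{X^*}$, $\alpha>0$) of arbitrarily small diameter. *)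

theory Defs
  imports "HOL-Analysis.Analysis"
begin

typedef V = "{x :: nat \<Rightarrow> rat. finite {n. x n \<noteq> 0}}"
  by (rule exI[of _ "\<lambda>_. 0"]) auto

definition vplus :: "V \<Rightarrow> V \<Rightarrow> V" where
  "vplus a b = Abs_V (\<lambda>n. Rep_V a n + Rep_V b n)"

definition vscale :: "rat \<Rightarrow> V \<Rightarrow> V" where
  "vscale q a = Abs_V (\<lambda>n. q * Rep_V a n)"

definition is_seminorm_V :: "(V \<Rightarrow> real) \<Rightarrow> bool" where
  "is_seminorm_V \<mu> \<longleftrightarrow>
     (\<forall>a. 0 \<le> \<mu> a) \<and>
     (\<forall>a b. \<mu> (vplus a b) \<le> \<mu> a + \<mu> b) \<and>
     (\<forall>q a. \<mu> (vscale q a) = \<bar>real_of_rat q\<bar> * \<mu> a)"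

text \<open>The space P of seminorms on V, a subset of the function space V => real
  (whose topology is the product topology = pointwise convergence).\<close>
definition Pset :: "(V \<Rightarrow> real) set" where
  "Pset = {\<mu>. is_seminorm_V \<mu>}"

definition c00 :: "(nat \<Rightarrow> real) set" where
  "c00 = {x. finite {n. x n \<noteq> 0}}"

definition emb :: "V \<Rightarrow> (nat \<Rightarrow> real)" where
  "emb a = (\<lambda>n. real_of_rat (Rep_V a n))"

definition is_seminorm_c00 :: "((nat \<Rightarrow> real) \<Rightarrow> real) \<Rightarrow> bool" where
  "is_seminorm_c00 p \<longleftrightarrow>
     (\<forall>x\<in>c00. 0 \<le> p x) \<and>
     (\<forall>x\<in>c00. \<forall>y\<in>c00. p (\<lambda>n. x n + y n) \<le> p x + p y) \<and>
     (\<forall>c. \<forall>x\<in>c00. p (\<lambda>n. c * x n) = \<bar>c\<bar> * p x)"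

text \<open>The (unique) seminorm extension of \<mu> to c00.\<close>
definition mubar :: "(V \<Rightarrow> real) \<Rightarrow> (nat \<Rightarrow> real) \<Rightarrow> real" where
  "mubar \<mu> x = (THE r. \<exists>p. is_seminorm_c00 p \<and> (\<forall>a. p (emb a) = \<mu> a) \<and> p x = r)"

text \<open>Elements of X_mu are represented by mubar-Cauchy sequences in c00;
  two representatives denote the same element iff their distance is 0.\<close>
definition Xspace :: "(V \<Rightarrow> real) \<Rightarrow> (nat \<Rightarrow> nat \<Rightarrow> real) set" where
  "Xspace \<mu> = {s. (\<forall>k. s k \<in> c00) \<and>
     (\<forall>\<epsilon>>0. \<exists>N. \<forall>m\<ge>N. \<forall>n\<ge>N. mubar \<mu> (\<lambda>i. s m i - s n i) < \<epsilon>)}"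

definition Xnorm :: "(V \<Rightarrow> real) \<Rightarrow> (nat \<Rightarrow> nat \<Rightarrow> real) \<Rightarrow> real" where
  "Xnorm \<mu> s = lim (\<lambda>k. mubar \<mu> (s k))"

definition Xdist :: "(V \<Rightarrow> real) \<Rightarrow> (nat \<Rightarrow> nat \<Rightarrow> real) \<Rightarrow> (nat \<Rightarrow> nat \<Rightarrow> real) \<Rightarrow> real" where
  "Xdist \<mu> s t = Xnorm \<mu> (\<lambda>k i. s k i - t k i)"

definition Xball :: "(V \<Rightarrow> real) \<Rightarrow> (nat \<Rightarrow> nat \<Rightarrow> real) set" where
  "Xball \<mu> = {s \<in> Xspace \<mu>. Xnorm \<mu> s \<le> 1}"

definition is_Xfunctional :: "(V \<Rightarrow> real) \<Rightarrow> ((nat \<Rightarrow> nat \<Rightarrow> real) \<Rightarrow> real) \<Rightarrow> bool" where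
  "is_Xfunctional \<mu> F \<longleftrightarrow>
     (\<forall>s\<in>Xspace \<mu>. \<forall>t\<in>Xspace \<mu>. F (\<lambda>k i. s k i + t k i) = F s + F t) \<and>
     (\<forall>c. \<forall>s\<in>Xspace \<mu>. F (\<lambda>k i. c * s k i) = c * F s) \<and>
     (\<exists>C. \<forall>s\<in>Xspace \<mu>. \<bar>F s\<bar> \<le> C * Xnorm \<mu> s)"

definition dualnorm :: "(V \<Rightarrow> real) \<Rightarrow> ((nat \<Rightarrow> nat \<Rightarrow> real) \<Rightarrow> real) \<Rightarrow> real" where
  "dualnorm \<mu> F = Sup {\<bar>F s\<bar> | s. s \<in> Xball \<mu>}"

definition slice :: "(V \<Rightarrow> real) \<Rightarrow> ((nat \<Rightarrow> nat \<Rightarrow> real) \<Rightarrow> real) \<Rightarrow> real \<Rightarrow> (nat \<Rightarrow> nat \<Rightarrow> real) set" where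
  "slice \<mu> F \<alpha> = {s \<in> Xball \<mu>. F s > 1 - \<alpha>}"

definition Xdiam :: "(V \<Rightarrow> real) \<Rightarrow> (nat \<Rightarrow> nat \<Rightarrow> real) set \<Rightarrow> real" where
  "Xdiam \<mu> S = Sup {Xdist \<mu> s t | s t. s \<in> S \<and> t \<in> S}"

definition ball_dentable :: "(V \<Rightarrow> real) \<Rightarrow> bool" where
  "ball_dentable \<mu> \<longleftrightarrow>
     (\<forall>\<epsilon>>0. \<exists>F \<alpha>. is_Xfunctional \<mu> F \<and> dualnorm \<mu> F = 1 \<and> \<alpha> > 0 \<and>
        Xdiam \<mu> (slice \<mu> F \<alpha>) < \<epsilon>)"

text \<open>dim X_mu = infinity: for every n there are n linearly independent
  elements of X_mu (equality in X_mu meaning distance 0).\<close>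
definition X_infdim :: "(V \<Rightarrow> real) \<Rightarrow> bool" where
  "X_infdim \<mu> \<longleftrightarrow>
     (\<forall>n. \<exists>s :: nat \<Rightarrow> nat \<Rightarrow> nat \<Rightarrow> real. (\<forall>j<n. s j \<in> Xspace \<mu>) \<and>
        (\<forall>c :: nat \<Rightarrow> real. Xnorm \<mu> (\<lambda>k i. \<Sum>j<n. c j * s j k i) = 0 \<longrightarrow> (\<forall>j<n. c j = 0)))"

definition Pinf :: "(V \<Rightarrow> real) set" where
  "Pinf = {\<mu> \<in> Pset. X_infdim \<mu>}"

definition Bset :: "(V \<Rightarrow> real) set" where
  "Bset = {\<mu> \<in> Pinf. \<forall>x\<in>c00. mubar \<mu> x = 0 \<longrightarrow> x = (\<lambda>_. 0)}"

definition Fsigma_delta_in :: "'a topology \<Rightarrow> 'a set \<Rightarrow> bool" where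
  "Fsigma_delta_in T S \<longleftrightarrow>
     (\<exists>C :: nat \<Rightarrow> nat \<Rightarrow> 'a set. (\<forall>i j. closedin T (C i j)) \<and>
        S = (\<Inter>i. \<Union>j. C i j))"

end

theory Submission
  imports Defs
begin

text \<open>A functional of norm at most one on \<open>X\<^sub>\<mu>\<close> is determined by its values on the unit
  vectors, which have the form \<open>t\<^sub>n \<mu>(e\<^sub>n)\<close> with \<open>t \<in> [-1,1]\<^sup>\<nat>\<close>; conversely such a \<open>t\<close>
  defines a functional of norm at most one as soon as \<open>|\<Sum>\<^sub>n a\<^sub>n t\<^sub>n \<mu>(e\<^sub>n)| \<le> \<mu>(a)\<close> for every
  rational vector \<open>a\<close>. Since rational vectors are dense in \<open>X\<^sub>\<mu>\<close>, the ball is dentable iff for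
  every \<open>\<epsilon> = 1/(i+1)\<close> there are \<open>\<alpha> = 1/(j+2)\<close>, a rational \<open>a\<^sub>0\<close> and such a \<open>t\<close> whose
  functional nearly attains its norm at \<open>a\<^sub>0\<close> and whose \<open>\<alpha>\<close>-slice contains no two rational
  points of the open unit ball at \<open>\<mu>\<close>-distance more than \<open>\<epsilon>\<close>. For fixed \<open>\<epsilon>, \<alpha>, a\<^sub>0\<close> these are
  closed conditions on \<open>(\<mu>, t)\<close> for pointwise convergence, and \<open>[-1,1]\<^sup>\<nat>\<close> is compact, so
  projecting away \<open>t\<close> leaves a closed set of seminorms. Intersecting over \<open>i\<close> the union over
  the countably many pairs \<open>(j, a\<^sub>0)\<close> exhibits the dentable seminorms as an \<open>F\<^sub>\<sigma>\<^sub>\<delta>\<close> set.\<close>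

section \<open>Finitely supported vectors\<close>

definition vbasis :: "nat \<Rightarrow> V" where
  "vbasis m = Abs_V (\<lambda>i. if i = m then 1 else 0)"

definition cbasis :: "nat \<Rightarrow> nat \<Rightarrow> real" where
  "cbasis m = (\<lambda>i. if i = m then 1 else 0)"

definition vminus :: "V \<Rightarrow> V \<Rightarrow> V" where
  "vminus a b = vplus a (vscale (-1) b)"

lemma finite_support_Rep_V: "finite {n. Rep_V a n \<noteq> 0}"
  using Rep_V by auto

lemma Rep_V_Abs_V: "finite {n. f n \<noteq> 0} \<Longrightarrow> Rep_V (Abs_V f) = f"
  by (simp add: Abs_V_inverse)

lemma Rep_vplus: "Rep_V (vplus a b) = (\<lambda>n. Rep_V a n + Rep_V b n)"
  unfolding vplus_def using finite_support_Rep_V[of a] finite_support_Rep_V[of b]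
  by (intro Rep_V_Abs_V) (auto intro: finite_subset[of _ "{n. Rep_V a n \<noteq> 0} \<union> {n. Rep_V b n \<noteq> 0}"])

lemma Rep_vscale: "Rep_V (vscale q a) = (\<lambda>n. q * Rep_V a n)"
  unfolding vscale_def using finite_support_Rep_V[of a]
  by (intro Rep_V_Abs_V) (auto intro: finite_subset[of _ "{n. Rep_V a n \<noteq> 0}"])

lemma Rep_vbasis: "Rep_V (vbasis m) = (\<lambda>i. if i = m then 1 else 0)"
  unfolding vbasis_def by (intro Rep_V_Abs_V) (auto intro: finite_subset[of _ "{m}"])

lemma c00_add [intro]: "x \<in> c00 \<Longrightarrow> y \<in> c00 \<Longrightarrow> (\<lambda>n. x n + y n) \<in> c00"
  unfolding c00_def by (auto intro: finite_subset[of _ "{n. x n \<noteq> 0} \<union> {n. y n \<noteq> 0}"])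

lemma c00_diff [intro]: "x \<in> c00 \<Longrightarrow> y \<in> c00 \<Longrightarrow> (\<lambda>n. x n - y n) \<in> c00"
  unfolding c00_def by (auto intro: finite_subset[of _ "{n. x n \<noteq> 0} \<union> {n. y n \<noteq> 0}"])

lemma c00_scale [intro]: "x \<in> c00 \<Longrightarrow> (\<lambda>n. c * x n) \<in> c00"
  unfolding c00_def by (auto intro: finite_subset[of _ "{n. x n \<noteq> 0}"])

lemma c00_zero [intro]: "(\<lambda>n. 0) \<in> c00"
  by (simp add: c00_def)

lemma cbasis_in_c00 [intro]: "cbasis m \<in> c00"
  by (simp add: c00_def cbasis_def)

lemma emb_in_c00 [intro]: "emb a \<in> c00"
  using finite_support_Rep_V[of a] by (simp add: c00_def emb_def)

lemma c00_sum [intro]: "(\<And>j. j \<in> S \<Longrightarrow> u j \<in> c00) \<Longrightarrow> (\<lambda>n. \<Sum>j\<in>S. u j n) \<in> c00"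
  by (induction S rule: infinite_finite_induct) auto

lemma emb_vplus: "emb (vplus a b) = (\<lambda>n. emb a n + emb b n)"
  by (simp add: emb_def Rep_vplus of_rat_add)

lemma emb_vscale: "emb (vscale q a) = (\<lambda>n. real_of_rat q * emb a n)"
  by (simp add: emb_def Rep_vscale of_rat_mult)

lemma emb_vminus: "emb (vminus a b) = (\<lambda>n. emb a n - emb b n)"
  by (simp add: vminus_def emb_vplus emb_vscale of_rat_minus)

lemma emb_vbasis: "emb (vbasis m) = cbasis m"
  by (simp add: emb_def Rep_vbasis cbasis_def fun_eq_iff)

lemma support_emb: "{n. emb a n \<noteq> 0} = {n. Rep_V a n \<noteq> 0}"
  by (simp add: emb_def)

lemma emb_inject: "emb a = emb b \<Longrightarrow> a = b"
  by (metis Rep_V_inject emb_def fun_eq_iff of_rat_eq_iff)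

lemma emb_eq_sum_cbasis:
  "emb a = (\<lambda>i. \<Sum>n\<in>{n. Rep_V a n \<noteq> 0}. real_of_rat (Rep_V a n) * cbasis n i)"
proof
  fix i
  have "(\<Sum>n\<in>{n. Rep_V a n \<noteq> 0}. real_of_rat (Rep_V a n) * cbasis n i)
      = (\<Sum>n\<in>{n. Rep_V a n \<noteq> 0}. if n = i then real_of_rat (Rep_V a n) else 0)"
    by (rule sum.cong) (auto simp: cbasis_def)
  then show "emb a i = (\<Sum>n\<in>{n. Rep_V a n \<noteq> 0}. real_of_rat (Rep_V a n) * cbasis n i)"
    by (simp add: finite_support_Rep_V emb_def)
qed

section \<open>The seminorm extension to c00\<close>

locale c00_seminorm =
  fixes p :: "(nat \<Rightarrow> real) \<Rightarrow> real"
  assumes is_seminorm: "is_seminorm_c00 p"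
begin

lemma nonneg: "x \<in> c00 \<Longrightarrow> 0 \<le> p x"
  using is_seminorm by (simp add: is_seminorm_c00_def)

lemma add: "x \<in> c00 \<Longrightarrow> y \<in> c00 \<Longrightarrow> p (\<lambda>n. x n + y n) \<le> p x + p y"
  using is_seminorm by (simp add: is_seminorm_c00_def)

lemma scale: "x \<in> c00 \<Longrightarrow> p (\<lambda>n. c * x n) = \<bar>c\<bar> * p x"
  using is_seminorm by (simp add: is_seminorm_c00_def)

lemma zero: "p (\<lambda>n. 0) = 0"
  using scale[of "\<lambda>n. 0" 0] by auto

lemma minus_commute: "x \<in> c00 \<Longrightarrow> y \<in> c00 \<Longrightarrow> p (\<lambda>n. x n - y n) = p (\<lambda>n. y n - x n)"
  using scale[of "\<lambda>n. y n - x n" "-1"] by auto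

lemma triangle_diff:
  "x \<in> c00 \<Longrightarrow> y \<in> c00 \<Longrightarrow> z \<in> c00 \<Longrightarrow> p (\<lambda>n. x n - z n) \<le> p (\<lambda>n. x n - y n) + p (\<lambda>n. y n - z n)"
  using add[of "\<lambda>n. x n - y n" "\<lambda>n. y n - z n"] by auto

lemma le_diff_add: "x \<in> c00 \<Longrightarrow> y \<in> c00 \<Longrightarrow> p x \<le> p (\<lambda>n. x n - y n) + p y"
  using add[of "\<lambda>n. x n - y n" y] by auto

lemma abs_diff_le: "x \<in> c00 \<Longrightarrow> y \<in> c00 \<Longrightarrow> \<bar>p x - p y\<bar> \<le> p (\<lambda>n. x n - y n)"
  using le_diff_add[of x y] le_diff_add[of y x] minus_commute[of x y] by linarith

lemma le_sum_cbasis: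
  assumes "x \<in> c00"
  shows "p x \<le> (\<Sum>n\<in>{n. x n \<noteq> 0}. \<bar>x n\<bar> * p (cbasis n))"
proof -
  have "\<forall>x. {n. x n \<noteq> 0} \<subseteq> S \<longrightarrow> p x \<le> (\<Sum>n\<in>S. \<bar>x n\<bar> * p (cbasis n))" if "finite S" for S
    using that
  proof (induction S rule: finite_induct)
    case empty
    then show ?case by (auto simp: zero)
  next
    case (insert m S)
    show ?case
    proof (intro allI impI)
      fix x :: "nat \<Rightarrow> real" assume supp: "{n. x n \<noteq> 0} \<subseteq> insert m S"
      define x' where "x' = (\<lambda>i. if i = m then 0 else x i)"
      have "{n. x' n \<noteq> 0} \<subseteq> S"
        using supp by (auto simp: x'_def)
      then have "x' \<in> c00"
        using insert.hyps(1) unfolding c00_def by (auto intro: finite_subset)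
      have "x = (\<lambda>n. x m * cbasis m n + x' n)"
        by (auto simp: cbasis_def x'_def)
      then have "p x \<le> \<bar>x m\<bar> * p (cbasis m) + p x'"
        using add[OF c00_scale[OF cbasis_in_c00] \<open>x' \<in> c00\<close>] scale[OF cbasis_in_c00] by metis
      also have "p x' \<le> (\<Sum>n\<in>S. \<bar>x' n\<bar> * p (cbasis n))"
        using insert.IH \<open>{n. x' n \<noteq> 0} \<subseteq> S\<close> by blast
      also have "\<dots> = (\<Sum>n\<in>S. \<bar>x n\<bar> * p (cbasis n))"
        using insert.hyps(2) by (intro sum.cong) (auto simp: x'_def)
      finally show "p x \<le> (\<Sum>n\<in>insert m S. \<bar>x n\<bar> * p (cbasis n))"
        using insert.hyps by simp
    qed
  qed
  then show ?thesis
    using assms by (simp add: c00_def)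
qed

end

lemma is_seminorm_c00_cong:
  assumes "\<And>x. x \<in> c00 \<Longrightarrow> p x = q x"
  shows "is_seminorm_c00 p = is_seminorm_c00 q"
  unfolding is_seminorm_c00_def by (simp add: assms c00_add c00_scale)

definition wnorm :: "(V \<Rightarrow> real) \<Rightarrow> (nat \<Rightarrow> real) \<Rightarrow> real" where
  "wnorm \<mu> x = (\<Sum>n\<in>{n. x n \<noteq> 0}. \<bar>x n\<bar> * \<mu> (vbasis n))"

lemma wnorm_eq_sum: "finite S \<Longrightarrow> {n. x n \<noteq> 0} \<subseteq> S \<Longrightarrow> wnorm \<mu> x = (\<Sum>n\<in>S. \<bar>x n\<bar> * \<mu> (vbasis n))"
  unfolding wnorm_def by (rule sum.mono_neutral_left) auto

text \<open>The infimal convolution of \<open>\<mu>\<close> with the weighted \<open>\<ell>\<^sup>1\<close> norm \<open>wnorm \<mu>\<close>; it is the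
  seminorm extension that \<open>mubar\<close> picks out.\<close>

definition mu_ext :: "(V \<Rightarrow> real) \<Rightarrow> (nat \<Rightarrow> real) \<Rightarrow> real" where
  "mu_ext \<mu> x = Inf {\<mu> a + wnorm \<mu> (\<lambda>n. x n - emb a n) | a. True}"

locale V_seminorm =
  fixes \<mu> :: "V \<Rightarrow> real"
  assumes in_Pset: "\<mu> \<in> Pset"
begin

lemma nonneg: "0 \<le> \<mu> a"
  using in_Pset by (simp add: Pset_def is_seminorm_V_def)

lemma triangle: "\<mu> (vplus a b) \<le> \<mu> a + \<mu> b"
  using in_Pset by (simp add: Pset_def is_seminorm_V_def)

lemma scale: "\<mu> (vscale q a) = \<bar>real_of_rat q\<bar> * \<mu> a"
  using in_Pset by (simp add: Pset_def is_seminorm_V_def)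

lemma le_vminus_add: "\<mu> a \<le> \<mu> (vminus a b) + \<mu> b"
proof -
  have "vplus (vminus a b) b = a"
    by (rule emb_inject) (simp add: emb_vplus emb_vminus)
  then show ?thesis
    using triangle[of "vminus a b" b] by simp
qed

lemma le_wnorm_emb: "\<mu> a \<le> wnorm \<mu> (emb a)"
proof -
  have "\<forall>a. {n. Rep_V a n \<noteq> 0} \<subseteq> S \<longrightarrow> \<mu> a \<le> (\<Sum>n\<in>S. \<bar>emb a n\<bar> * \<mu> (vbasis n))" if "finite S" for S
    using that
  proof (induction S rule: finite_induct)
    case empty
    have "\<mu> a = 0" if "{n. Rep_V a n \<noteq> 0} \<subseteq> {}" for a
    proof -
      have "a = vscale 0 a"
        using that by (intro emb_inject) (auto simp: emb_def Rep_vscale)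
      then show ?thesis
        using scale[of 0 a] by simp
    qed
    then show ?case by simp
  next
    case (insert m S)
    show ?case
    proof (intro allI impI)
      fix a assume supp: "{n. Rep_V a n \<noteq> 0} \<subseteq> insert m S"
      define a' where "a' = vplus a (vscale (- Rep_V a m) (vbasis m))"
      have Rep_a': "Rep_V a' n = (if n = m then 0 else Rep_V a n)" for n
        by (simp add: a'_def Rep_vplus Rep_vscale Rep_vbasis)
      have "{n. Rep_V a' n \<noteq> 0} \<subseteq> S"
        using supp by (auto simp: Rep_a')
      have "a = vplus (vscale (Rep_V a m) (vbasis m)) a'"
        by (subst Rep_V_inject[symmetric]) (auto simp: Rep_vplus Rep_vscale Rep_vbasis Rep_a')
      then have "\<mu> a \<le> \<bar>real_of_rat (Rep_V a m)\<bar> * \<mu> (vbasis m) + \<mu> a'"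
        using triangle scale by metis
      also have "\<mu> a' \<le> (\<Sum>n\<in>S. \<bar>emb a' n\<bar> * \<mu> (vbasis n))"
        using insert.IH \<open>{n. Rep_V a' n \<noteq> 0} \<subseteq> S\<close> by blast
      also have "\<dots> = (\<Sum>n\<in>S. \<bar>emb a n\<bar> * \<mu> (vbasis n))"
        using insert.hyps(2) by (intro sum.cong) (auto simp: emb_def Rep_a')
      finally show "\<mu> a \<le> (\<Sum>n\<in>insert m S. \<bar>emb a n\<bar> * \<mu> (vbasis n))"
        using insert.hyps by (simp add: emb_def)
    qed
  qed
  then show ?thesis
    using finite_support_Rep_V[of a] by (simp add: wnorm_def support_emb)
qed

sublocale wnorm: c00_seminorm "wnorm \<mu>"
proof
  show "is_seminorm_c00 (wnorm \<mu>)"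
    unfolding is_seminorm_c00_def
  proof (intro conjI ballI allI)
    show "0 \<le> wnorm \<mu> x" for x
      unfolding wnorm_def using nonneg by (intro sum_nonneg) simp
  next
    fix x y assume "x \<in> c00" "y \<in> c00"
    define S where "S = {n. x n \<noteq> 0} \<union> {n. y n \<noteq> 0}"
    have S: "finite S"
      using \<open>x \<in> c00\<close> \<open>y \<in> c00\<close> by (simp add: S_def c00_def)
    have "wnorm \<mu> (\<lambda>n. x n + y n) = (\<Sum>n\<in>S. \<bar>x n + y n\<bar> * \<mu> (vbasis n))"
      by (rule wnorm_eq_sum[OF S]) (auto simp: S_def)
    also have "\<dots> \<le> (\<Sum>n\<in>S. \<bar>x n\<bar> * \<mu> (vbasis n) + \<bar>y n\<bar> * \<mu> (vbasis n))"
      by (intro sum_mono) (metis abs_triangle_ineq distrib_right nonneg mult_right_mono)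
    also have "\<dots> = wnorm \<mu> x + wnorm \<mu> y"
      by (simp add: sum.distrib wnorm_eq_sum[OF S] S_def)
    finally show "wnorm \<mu> (\<lambda>n. x n + y n) \<le> wnorm \<mu> x + wnorm \<mu> y" .
  next
    fix c x assume "x \<in> c00"
    then have S: "finite {n. x n \<noteq> 0}"
      by (simp add: c00_def)
    have "{n. c * x n \<noteq> 0} \<subseteq> {n. x n \<noteq> 0}"
      by auto
    then show "wnorm \<mu> (\<lambda>n. c * x n) = \<bar>c\<bar> * wnorm \<mu> x"
      by (simp add: wnorm_eq_sum[OF S] sum_distrib_left abs_mult mult.assoc)
  qed
qed

lemma exists_wnorm_diff_emb_less:
  assumes x: "x \<in> c00" and "0 < \<delta>"
  shows "\<exists>a. wnorm \<mu> (\<lambda>n. x n - emb a n) < \<delta>"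
proof -
  define S where "S = {n. x n \<noteq> 0}"
  have S: "finite S"
    using x by (simp add: S_def c00_def)
  define M where "M = (\<Sum>n\<in>S. \<mu> (vbasis n)) + 1"
  have "M > 0"
    using nonneg by (simp add: M_def sum_nonneg add_nonneg_pos)
  then have "\<delta> / M > 0"
    using \<open>0 < \<delta>\<close> by simp
  have "\<exists>q. \<bar>x n - real_of_rat q\<bar> < \<delta> / M" for n
    using Rats_dense_in_real[of "x n - \<delta> / M" "x n + \<delta> / M"] \<open>\<delta> / M > 0\<close>
    by (auto elim!: Rats_cases) (metis abs_diff_less_iff add.commute diff_less_eq)
  then obtain q where q: "\<And>n. \<bar>x n - real_of_rat (q n)\<bar> < \<delta> / M"
    by metis
  define a where "a = Abs_V (\<lambda>n. if n \<in> S then q n else 0)"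
  have emb_a: "emb a n = (if n \<in> S then real_of_rat (q n) else 0)" for n
    using S unfolding a_def emb_def
    by (subst Rep_V_Abs_V) (auto intro: finite_subset[of _ S])
  have "wnorm \<mu> (\<lambda>n. x n - emb a n) = (\<Sum>n\<in>S. \<bar>x n - emb a n\<bar> * \<mu> (vbasis n))"
    by (rule wnorm_eq_sum[OF S]) (auto simp: S_def emb_a)
  also have "\<dots> \<le> (\<Sum>n\<in>S. \<delta> / M * \<mu> (vbasis n))"
    by (intro sum_mono mult_right_mono) (use q nonneg in \<open>auto simp: emb_a less_imp_le\<close>)
  also have "\<dots> = \<delta> / M * (M - 1)"
    by (simp add: sum_distrib_left M_def)
  also have "\<dots> < \<delta>"
    using \<open>M > 0\<close> \<open>0 < \<delta>\<close> by (simp add: field_simps)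
  finally show ?thesis ..
qed

lemma mu_ext_le: "x \<in> c00 \<Longrightarrow> mu_ext \<mu> x \<le> \<mu> a + wnorm \<mu> (\<lambda>n. x n - emb a n)"
  unfolding mu_ext_def
  by (rule cInf_lower) (auto intro!: bdd_belowI[of _ 0] add_nonneg_nonneg nonneg wnorm.nonneg)

lemma le_mu_ext: "(\<And>a. r \<le> \<mu> a + wnorm \<mu> (\<lambda>n. x n - emb a n)) \<Longrightarrow> r \<le> mu_ext \<mu> x"
  unfolding mu_ext_def by (rule cInf_greatest) auto

lemma mu_ext_nonneg: "x \<in> c00 \<Longrightarrow> 0 \<le> mu_ext \<mu> x"
  by (rule le_mu_ext) (auto intro!: add_nonneg_nonneg nonneg wnorm.nonneg)

lemma mu_ext_le_wnorm_diff:
  assumes "x \<in> c00" "y \<in> c00"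
  shows "mu_ext \<mu> x \<le> mu_ext \<mu> y + wnorm \<mu> (\<lambda>n. x n - y n)"
proof -
  have "mu_ext \<mu> x - wnorm \<mu> (\<lambda>n. x n - y n) \<le> mu_ext \<mu> y"
  proof (rule le_mu_ext)
    fix a
    have "mu_ext \<mu> x \<le> \<mu> a + wnorm \<mu> (\<lambda>n. x n - emb a n)"
      using assms(1) by (rule mu_ext_le)
    also have "wnorm \<mu> (\<lambda>n. x n - emb a n) \<le> wnorm \<mu> (\<lambda>n. x n - y n) + wnorm \<mu> (\<lambda>n. y n - emb a n)"
      using assms by (intro wnorm.triangle_diff) auto
    finally show "mu_ext \<mu> x - wnorm \<mu> (\<lambda>n. x n - y n) \<le> \<mu> a + wnorm \<mu> (\<lambda>n. y n - emb a n)"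
      by simp
  qed
  then show ?thesis by simp
qed

lemma mu_ext_add:
  assumes x: "x \<in> c00" and y: "y \<in> c00"
  shows "mu_ext \<mu> (\<lambda>n. x n + y n) \<le> mu_ext \<mu> x + mu_ext \<mu> y"
proof -
  have split: "mu_ext \<mu> (\<lambda>n. x n + y n)
      \<le> (\<mu> a + wnorm \<mu> (\<lambda>n. x n - emb a n)) + (\<mu> b + wnorm \<mu> (\<lambda>n. y n - emb b n))" for a b
  proof -
    have "mu_ext \<mu> (\<lambda>n. x n + y n) \<le> \<mu> (vplus a b) + wnorm \<mu> (\<lambda>n. (x n + y n) - emb (vplus a b) n)"
      using x y by (intro mu_ext_le) auto
    also have "wnorm \<mu> (\<lambda>n. (x n + y n) - emb (vplus a b) n)
        = wnorm \<mu> (\<lambda>n. (x n - emb a n) + (y n - emb b n))"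
      by (simp add: emb_vplus algebra_simps)
    also have "\<dots> \<le> wnorm \<mu> (\<lambda>n. x n - emb a n) + wnorm \<mu> (\<lambda>n. y n - emb b n)"
      using x y by (intro wnorm.add) auto
    finally show ?thesis
      using triangle[of a b] by linarith
  qed
  have "mu_ext \<mu> (\<lambda>n. x n + y n) - mu_ext \<mu> x \<le> mu_ext \<mu> y"
  proof (rule le_mu_ext)
    fix b
    have "mu_ext \<mu> (\<lambda>n. x n + y n) - (\<mu> b + wnorm \<mu> (\<lambda>n. y n - emb b n)) \<le> mu_ext \<mu> x"
    proof (rule le_mu_ext)
      fix a
      show "mu_ext \<mu> (\<lambda>n. x n + y n) - (\<mu> b + wnorm \<mu> (\<lambda>n. y n - emb b n))
          \<le> \<mu> a + wnorm \<mu> (\<lambda>n. x n - emb a n)"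
        using split[of a b] by linarith
    qed
    then show "mu_ext \<mu> (\<lambda>n. x n + y n) - mu_ext \<mu> x \<le> \<mu> b + wnorm \<mu> (\<lambda>n. y n - emb b n)"
      by simp
  qed
  then show ?thesis by simp
qed

lemma mu_ext_scale_rat_le:
  assumes x: "x \<in> c00"
  shows "mu_ext \<mu> (\<lambda>n. real_of_rat q * x n) \<le> \<bar>real_of_rat q\<bar> * mu_ext \<mu> x"
proof -
  have bound: "mu_ext \<mu> (\<lambda>n. real_of_rat q * x n) \<le> \<bar>real_of_rat q\<bar> * (\<mu> a + wnorm \<mu> (\<lambda>n. x n - emb a n))" for a
  proof -
    have "mu_ext \<mu> (\<lambda>n. real_of_rat q * x n)
        \<le> \<mu> (vscale q a) + wnorm \<mu> (\<lambda>n. real_of_rat q * x n - emb (vscale q a) n)"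
      using x by (intro mu_ext_le) auto
    also have "wnorm \<mu> (\<lambda>n. real_of_rat q * x n - emb (vscale q a) n)
        = wnorm \<mu> (\<lambda>n. real_of_rat q * (x n - emb a n))"
      by (simp add: emb_vscale algebra_simps)
    finally show ?thesis
      using x by (simp add: scale wnorm.scale c00_diff emb_in_c00 distrib_left)
  qed
  show ?thesis
  proof (cases "q = 0")
    case True
    then show ?thesis
      using bound[of undefined] by simp
  next
    case False
    have "mu_ext \<mu> (\<lambda>n. real_of_rat q * x n) / \<bar>real_of_rat q\<bar> \<le> mu_ext \<mu> x"
      using False bound by (intro le_mu_ext) (simp add: divide_le_eq mult.commute)
    then show ?thesis
      using False by (simp add: divide_le_eq mult.commute)
  qed
qed

lemma mu_ext_scale_le:
  assumes x: "x \<in> c00"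
  shows "mu_ext \<mu> (\<lambda>n. c * x n) \<le> \<bar>c\<bar> * mu_ext \<mu> x"
proof -
  \<comment> \<open>a bound valid for rational \<open>r\<close> and continuous in \<open>r\<close>, evaluated at \<open>r = c\<close>\<close>
  define f where "f r = \<bar>r\<bar> * mu_ext \<mu> x + \<bar>c - r\<bar> * wnorm \<mu> x" for r
  have "mu_ext \<mu> (\<lambda>n. c * x n) \<le> f r" if "r \<in> \<rat>" for r
  proof -
    from that obtain q where r: "r = real_of_rat q"
      by (cases rule: Rats_cases) simp
    have "mu_ext \<mu> (\<lambda>n. c * x n) \<le> mu_ext \<mu> (\<lambda>n. r * x n) + wnorm \<mu> (\<lambda>n. c * x n - r * x n)"
      using x by (intro mu_ext_le_wnorm_diff) auto
    also have "mu_ext \<mu> (\<lambda>n. r * x n) \<le> \<bar>r\<bar> * mu_ext \<mu> x"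
      unfolding r using x by (rule mu_ext_scale_rat_le)
    also have "(\<lambda>n. c * x n - r * x n) = (\<lambda>n. (c - r) * x n)"
      by (simp add: algebra_simps)
    finally show ?thesis
      using x by (simp add: f_def wnorm.scale)
  qed
  moreover have "continuous_on (closure \<rat>) f"
    unfolding f_def by (intro continuous_intros)
  ultimately have "mu_ext \<mu> (\<lambda>n. c * x n) \<le> f c"
    using continuous_ge_on_closure[of \<rat> f c] by (simp add: Rats_closure_real)
  then show ?thesis
    by (simp add: f_def)
qed

lemma mu_ext_scale:
  assumes x: "x \<in> c00"
  shows "mu_ext \<mu> (\<lambda>n. c * x n) = \<bar>c\<bar> * mu_ext \<mu> x"
proof (cases "c = 0")
  case True
  then show ?thesis
    using mu_ext_scale_le[OF x, of 0] mu_ext_nonneg[OF c00_zero] by simp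
next
  case False
  have "mu_ext \<mu> x = mu_ext \<mu> (\<lambda>n. (1 / c) * (c * x n))"
    using False by simp
  also have "\<dots> \<le> \<bar>1 / c\<bar> * mu_ext \<mu> (\<lambda>n. c * x n)"
    using x by (intro mu_ext_scale_le) auto
  finally have "\<bar>c\<bar> * mu_ext \<mu> x \<le> mu_ext \<mu> (\<lambda>n. c * x n)"
    using False by (simp add: field_simps)
  then show ?thesis
    using mu_ext_scale_le[OF x, of c] by linarith
qed

lemma mu_ext_emb: "mu_ext \<mu> (emb b) = \<mu> b"
proof (rule antisym)
  show "mu_ext \<mu> (emb b) \<le> \<mu> b"
    using mu_ext_le[OF emb_in_c00, of b b] wnorm.zero by simp
  show "\<mu> b \<le> mu_ext \<mu> (emb b)"
  proof (rule le_mu_ext)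
    fix a
    have "\<mu> b \<le> \<mu> (vminus b a) + \<mu> a"
      by (rule le_vminus_add)
    also have "\<mu> (vminus b a) \<le> wnorm \<mu> (\<lambda>n. emb b n - emb a n)"
      using le_wnorm_emb[of "vminus b a"] by (simp add: emb_vminus)
    finally show "\<mu> b \<le> \<mu> a + wnorm \<mu> (\<lambda>n. emb b n - emb a n)"
      by simp
  qed
qed

lemma is_seminorm_mu_ext: "is_seminorm_c00 (mu_ext \<mu>)"
  unfolding is_seminorm_c00_def by (simp add: mu_ext_nonneg mu_ext_add mu_ext_scale)

lemma seminorm_extension_approx:
  assumes "is_seminorm_c00 p" "\<And>a. p (emb a) = \<mu> a" "x \<in> c00"
  shows "\<bar>p x - \<mu> a\<bar> \<le> wnorm \<mu> (\<lambda>n. x n - emb a n)"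
proof -
  interpret p: c00_seminorm p
    using assms(1) by (rule c00_seminorm.intro)
  have "\<bar>p x - \<mu> a\<bar> \<le> p (\<lambda>n. x n - emb a n)"
    using p.abs_diff_le[of x "emb a"] assms by auto
  also have "\<dots> \<le> (\<Sum>n\<in>{n. x n - emb a n \<noteq> 0}. \<bar>x n - emb a n\<bar> * p (cbasis n))"
    using assms by (intro p.le_sum_cbasis) auto
  also have "\<dots> = wnorm \<mu> (\<lambda>n. x n - emb a n)"
    by (simp add: wnorm_def assms(2) flip: emb_vbasis)
  finally show ?thesis .
qed

lemma seminorm_extension_unique:
  assumes "is_seminorm_c00 p" "\<And>a. p (emb a) = \<mu> a" "x \<in> c00"
  shows "p x = mu_ext \<mu> x"
proof -
  have "\<bar>p x - mu_ext \<mu> x\<bar> \<le> e" if "e > 0" for e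
  proof -
    obtain a where a: "wnorm \<mu> (\<lambda>n. x n - emb a n) < e / 2"
      using exists_wnorm_diff_emb_less[OF assms(3)] \<open>e > 0\<close> by (meson half_gt_zero)
    have "\<bar>p x - \<mu> a\<bar> \<le> wnorm \<mu> (\<lambda>n. x n - emb a n)"
      using assms by (rule seminorm_extension_approx)
    moreover have "\<bar>mu_ext \<mu> x - \<mu> a\<bar> \<le> wnorm \<mu> (\<lambda>n. x n - emb a n)"
      using is_seminorm_mu_ext mu_ext_emb assms(3) by (rule seminorm_extension_approx)
    ultimately show ?thesis
      using a by linarith
  qed
  then show ?thesis
    by (metis abs_le_zero_iff field_le_epsilon add_0 eq_iff_diff_eq_0)
qed

lemma mubar_eq_mu_ext: "x \<in> c00 \<Longrightarrow> mubar \<mu> x = mu_ext \<mu> x"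
  unfolding mubar_def
  by (rule the_equality) (use is_seminorm_mu_ext mu_ext_emb seminorm_extension_unique in blast)+

sublocale mubar: c00_seminorm "mubar \<mu>"
  by unfold_locales (simp add: is_seminorm_c00_cong[of "mubar \<mu>" "mu_ext \<mu>"] mubar_eq_mu_ext is_seminorm_mu_ext)

lemma mubar_emb: "mubar \<mu> (emb a) = \<mu> a"
  by (simp add: mubar_eq_mu_ext emb_in_c00 mu_ext_emb)

lemma abs_mubar_diff_le_wnorm: "x \<in> c00 \<Longrightarrow> \<bar>mubar \<mu> x - \<mu> a\<bar> \<le> wnorm \<mu> (\<lambda>n. x n - emb a n)"
  using mubar.is_seminorm mubar_emb by (rule seminorm_extension_approx)

lemma mubar_le_wnorm: "x \<in> c00 \<Longrightarrow> mubar \<mu> x \<le> wnorm \<mu> x"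
  using abs_mubar_diff_le_wnorm[of x "vscale 0 undefined"] scale[of 0] by (simp add: emb_vscale)

lemma mubar_cbasis: "mubar \<mu> (cbasis n) = \<mu> (vbasis n)"
  using mubar_emb[of "vbasis n"] by (simp add: emb_vbasis)

end

section \<open>The completion X_mu and its dual\<close>

definition X_linear :: "(V \<Rightarrow> real) \<Rightarrow> ((nat \<Rightarrow> nat \<Rightarrow> real) \<Rightarrow> real) \<Rightarrow> bool" where
  "X_linear \<mu> F \<longleftrightarrow>
     (\<forall>s\<in>Xspace \<mu>. \<forall>t\<in>Xspace \<mu>. F (\<lambda>k i. s k i + t k i) = F s + F t) \<and>
     (\<forall>c. \<forall>s\<in>Xspace \<mu>. F (\<lambda>k i. c * s k i) = c * F s)"

definition X_contraction :: "(V \<Rightarrow> real) \<Rightarrow> ((nat \<Rightarrow> nat \<Rightarrow> real) \<Rightarrow> real) \<Rightarrow> bool" where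
  "X_contraction \<mu> F \<longleftrightarrow> (\<forall>s\<in>Xspace \<mu>. \<bar>F s\<bar> \<le> Xnorm \<mu> s)"

context V_seminorm
begin

lemma Xspace_c00: "s \<in> Xspace \<mu> \<Longrightarrow> s k \<in> c00"
  by (simp add: Xspace_def)

lemma Xspace_Cauchy: "s \<in> Xspace \<mu> \<Longrightarrow> e > 0 \<Longrightarrow> \<exists>N. \<forall>m\<ge>N. \<forall>n\<ge>N. mubar \<mu> (\<lambda>i. s m i - s n i) < e"
  by (simp add: Xspace_def)

lemma XspaceI:
  "(\<And>k. s k \<in> c00) \<Longrightarrow> (\<And>e. e > 0 \<Longrightarrow> \<exists>N. \<forall>m\<ge>N. \<forall>n\<ge>N. mubar \<mu> (\<lambda>i. s m i - s n i) < e)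
    \<Longrightarrow> s \<in> Xspace \<mu>"
  by (simp add: Xspace_def)

lemma Xspace_convergent:
  assumes s: "s \<in> Xspace \<mu>"
    and f: "\<And>x y. x \<in> c00 \<Longrightarrow> y \<in> c00 \<Longrightarrow> \<bar>f x - f y\<bar> \<le> mubar \<mu> (\<lambda>i. x i - y i)"
  shows "convergent (\<lambda>k. f (s k))"
proof -
  have "Cauchy (\<lambda>k. f (s k))"
  proof (rule metric_CauchyI)
    fix e :: real assume "0 < e"
    then obtain N where N: "\<forall>m\<ge>N. \<forall>n\<ge>N. mubar \<mu> (\<lambda>i. s m i - s n i) < e"
      using Xspace_Cauchy[OF s] by blast
    have "dist (f (s m)) (f (s n)) < e" if "m \<ge> N" "n \<ge> N" for m n
    proof -
      have "mubar \<mu> (\<lambda>i. s m i - s n i) < e"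
        using N that by blast
      then show ?thesis
        using f[OF Xspace_c00[OF s] Xspace_c00[OF s], of m n] unfolding dist_real_def by linarith
    qed
    then show "\<exists>M. \<forall>m\<ge>M. \<forall>n\<ge>M. dist (f (s m)) (f (s n)) < e"
      by blast
  qed
  then show ?thesis
    by (simp add: Cauchy_convergent_iff)
qed

lemma Xnorm_LIMSEQ: "s \<in> Xspace \<mu> \<Longrightarrow> (\<lambda>k. mubar \<mu> (s k)) \<longlonglongrightarrow> Xnorm \<mu> s"
  unfolding Xnorm_def by (rule convergent_LIMSEQ_iff[THEN iffD1, OF Xspace_convergent[OF _ mubar.abs_diff_le]])

lemma Xspace_const: "x \<in> c00 \<Longrightarrow> (\<lambda>k. x) \<in> Xspace \<mu>"
  by (rule XspaceI) (auto simp: mubar.zero)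

lemma Xnorm_const: "Xnorm \<mu> (\<lambda>k. x) = mubar \<mu> x"
  by (simp add: Xnorm_def)

lemma Xspace_add:
  assumes s: "s \<in> Xspace \<mu>" and t: "t \<in> Xspace \<mu>"
  shows "(\<lambda>k i. s k i + t k i) \<in> Xspace \<mu>"
proof (rule XspaceI)
  show "(\<lambda>i. s k i + t k i) \<in> c00" for k
    using Xspace_c00[OF s] Xspace_c00[OF t] by blast
  fix e :: real assume "e > 0"
  then obtain N1 N2 where N1: "\<forall>m\<ge>N1. \<forall>n\<ge>N1. mubar \<mu> (\<lambda>i. s m i - s n i) < e / 2"
    and N2: "\<forall>m\<ge>N2. \<forall>n\<ge>N2. mubar \<mu> (\<lambda>i. t m i - t n i) < e / 2"
    using Xspace_Cauchy[OF s, of "e / 2"] Xspace_Cauchy[OF t, of "e / 2"] by auto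
  have "mubar \<mu> (\<lambda>i. s m i + t m i - (s n i + t n i)) < e" if "m \<ge> max N1 N2" "n \<ge> max N1 N2" for m n
  proof -
    have "(\<lambda>i. s m i + t m i - (s n i + t n i)) = (\<lambda>i. (s m i - s n i) + (t m i - t n i))"
      by (simp add: algebra_simps)
    then have "mubar \<mu> (\<lambda>i. s m i + t m i - (s n i + t n i))
        \<le> mubar \<mu> (\<lambda>i. s m i - s n i) + mubar \<mu> (\<lambda>i. t m i - t n i)"
      using mubar.add Xspace_c00[OF s] Xspace_c00[OF t] by (simp add: c00_diff)
    moreover have "mubar \<mu> (\<lambda>i. s m i - s n i) < e / 2" "mubar \<mu> (\<lambda>i. t m i - t n i) < e / 2"
      using N1 N2 that by auto
    ultimately show ?thesis
      by linarith
  qed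
  then show "\<exists>N. \<forall>m\<ge>N. \<forall>n\<ge>N. mubar \<mu> (\<lambda>i. s m i + t m i - (s n i + t n i)) < e"
    by blast
qed

lemma Xspace_scale:
  assumes s: "s \<in> Xspace \<mu>"
  shows "(\<lambda>k i. c * s k i) \<in> Xspace \<mu>"
proof (rule XspaceI)
  show "(\<lambda>i. c * s k i) \<in> c00" for k
    using Xspace_c00[OF s] by blast
  fix e :: real assume "e > 0"
  then have "e / (\<bar>c\<bar> + 1) > 0"
    by (simp add: add_nonneg_pos)
  then obtain N where N: "\<forall>m\<ge>N. \<forall>n\<ge>N. mubar \<mu> (\<lambda>i. s m i - s n i) < e / (\<bar>c\<bar> + 1)"
    using Xspace_Cauchy[OF s] by blast
  have "mubar \<mu> (\<lambda>i. c * s m i - c * s n i) < e" if "m \<ge> N" "n \<ge> N" for m n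
  proof -
    have "mubar \<mu> (\<lambda>i. c * s m i - c * s n i) = \<bar>c\<bar> * mubar \<mu> (\<lambda>i. s m i - s n i)"
      using mubar.scale[of "\<lambda>i. s m i - s n i" c] Xspace_c00[OF s] by (simp add: c00_diff right_diff_distrib)
    also have "\<dots> \<le> \<bar>c\<bar> * (e / (\<bar>c\<bar> + 1))"
      using N that by (intro mult_left_mono) (auto intro: less_imp_le)
    also have "\<dots> < e"
      using \<open>e > 0\<close> by (simp add: field_simps)
    finally show ?thesis .
  qed
  then show "\<exists>N. \<forall>m\<ge>N. \<forall>n\<ge>N. mubar \<mu> (\<lambda>i. c * s m i - c * s n i) < e"
    by blast
qed

lemma Xspace_diff:
  assumes "s \<in> Xspace \<mu>" "t \<in> Xspace \<mu>"
  shows "(\<lambda>k i. s k i - t k i) \<in> Xspace \<mu>"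
  using Xspace_add[OF assms(1) Xspace_scale[OF assms(2), of "-1"]] by simp

lemma Xnorm_nonneg: "s \<in> Xspace \<mu> \<Longrightarrow> 0 \<le> Xnorm \<mu> s"
  by (rule LIMSEQ_le_const[OF Xnorm_LIMSEQ]) (auto intro: mubar.nonneg Xspace_c00)

lemma Xnorm_add:
  assumes "s \<in> Xspace \<mu>" "t \<in> Xspace \<mu>"
  shows "Xnorm \<mu> (\<lambda>k i. s k i + t k i) \<le> Xnorm \<mu> s + Xnorm \<mu> t"
  using assms
  by (intro LIMSEQ_le[OF Xnorm_LIMSEQ[OF Xspace_add] tendsto_add[OF Xnorm_LIMSEQ Xnorm_LIMSEQ]])
    (auto intro: mubar.add Xspace_c00)

lemma Xnorm_scale:
  assumes s: "s \<in> Xspace \<mu>"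
  shows "Xnorm \<mu> (\<lambda>k i. c * s k i) = \<bar>c\<bar> * Xnorm \<mu> s"
proof -
  have "(\<lambda>k. mubar \<mu> (\<lambda>i. c * s k i)) = (\<lambda>k. \<bar>c\<bar> * mubar \<mu> (s k))"
    using mubar.scale Xspace_c00[OF s] by simp
  then show ?thesis
    using tendsto_mult_left[OF Xnorm_LIMSEQ[OF s], of "\<bar>c\<bar>"] by (simp add: Xnorm_def limI)
qed

lemma Xnorm_minus_commute:
  assumes "s \<in> Xspace \<mu>" "t \<in> Xspace \<mu>"
  shows "Xnorm \<mu> (\<lambda>k i. s k i - t k i) = Xnorm \<mu> (\<lambda>k i. t k i - s k i)"
  using Xnorm_scale[OF Xspace_diff[OF assms(2,1)], of "-1"] by simp

lemma Xnorm_triangle_diff: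
  assumes "s \<in> Xspace \<mu>" "t \<in> Xspace \<mu>" "u \<in> Xspace \<mu>"
  shows "Xnorm \<mu> (\<lambda>k i. s k i - u k i) \<le> Xnorm \<mu> (\<lambda>k i. s k i - t k i) + Xnorm \<mu> (\<lambda>k i. t k i - u k i)"
  using Xnorm_add[OF Xspace_diff[OF assms(1,2)] Xspace_diff[OF assms(2,3)]] by simp

lemma Xnorm_le_diff_add:
  assumes "s \<in> Xspace \<mu>" "t \<in> Xspace \<mu>"
  shows "Xnorm \<mu> s \<le> Xnorm \<mu> (\<lambda>k i. s k i - t k i) + Xnorm \<mu> t"
  using Xnorm_add[OF Xspace_diff[OF assms] assms(2)] by simp

lemma Xnorm_tail:
  assumes s: "s \<in> Xspace \<mu>" and "e > 0"
  obtains N where "Xnorm \<mu> (\<lambda>m i. s m i - s N i) \<le> e"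
proof -
  obtain N where N: "\<forall>m\<ge>N. \<forall>n\<ge>N. mubar \<mu> (\<lambda>i. s m i - s n i) < e"
    using Xspace_Cauchy[OF s \<open>e > 0\<close>] by blast
  have "(\<lambda>m i. s m i - s N i) \<in> Xspace \<mu>"
    using Xspace_diff[OF s Xspace_const[OF Xspace_c00[OF s]]] by simp
  then have "Xnorm \<mu> (\<lambda>m i. s m i - s N i) \<le> e"
    by (rule LIMSEQ_le_const2[OF Xnorm_LIMSEQ]) (use N in \<open>auto intro: less_imp_le\<close>)
  then show ?thesis ..
qed

lemma exists_emb_Xnorm_diff_less:
  assumes s: "s \<in> Xspace \<mu>" and "\<eta> > 0"
  shows "\<exists>a. Xnorm \<mu> (\<lambda>k i. s k i - emb a i) < \<eta>"
proof -
  obtain N where N: "Xnorm \<mu> (\<lambda>m i. s m i - s N i) \<le> \<eta> / 2"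
    using Xnorm_tail[OF s, of "\<eta> / 2"] \<open>\<eta> > 0\<close> by auto
  obtain a where a: "wnorm \<mu> (\<lambda>i. s N i - emb a i) < \<eta> / 2"
    using exists_wnorm_diff_emb_less[OF Xspace_c00[OF s], of "\<eta> / 2"] \<open>\<eta> > 0\<close> by auto
  have "Xnorm \<mu> (\<lambda>k i. s k i - emb a i) \<le> Xnorm \<mu> (\<lambda>k i. s k i - s N i) + Xnorm \<mu> (\<lambda>k i. s N i - emb a i)"
    using Xnorm_triangle_diff[of s "\<lambda>k. s N" "\<lambda>k. emb a"] s by (simp add: Xspace_const Xspace_c00 emb_in_c00)
  also have "Xnorm \<mu> (\<lambda>k i. s N i - emb a i) \<le> wnorm \<mu> (\<lambda>i. s N i - emb a i)"
    using Xspace_c00[OF s, of N] by (simp add: Xnorm_const mubar_le_wnorm c00_diff emb_in_c00)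
  finally show ?thesis
    using N a by (intro exI[of _ a]) linarith
qed

lemma Xball_zero: "(\<lambda>k i. 0) \<in> Xball \<mu>"
  using Xspace_const[OF c00_zero] by (simp add: Xball_def Xnorm_const mubar.zero)

lemma const_emb_in_Xball_iff: "(\<lambda>k. emb a) \<in> Xball \<mu> \<longleftrightarrow> \<mu> a \<le> 1"
  by (simp add: Xball_def Xspace_const emb_in_c00 Xnorm_const mubar_emb)

lemma Xdist_const_emb: "Xdist \<mu> (\<lambda>k. emb a) (\<lambda>k. emb b) = \<mu> (vminus a b)"
  using mubar_emb[of "vminus a b"] by (simp add: Xdist_def Xnorm_const emb_vminus)

lemma Xdist_le_Xdiam:
  assumes "S \<subseteq> Xball \<mu>" "s \<in> S" "u \<in> S"
  shows "Xdist \<mu> s u \<le> Xdiam \<mu> S"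
  unfolding Xdiam_def
proof (rule cSup_upper)
  show "Xdist \<mu> s u \<in> {Xdist \<mu> s u |s u. s \<in> S \<and> u \<in> S}"
    using assms by blast
  show "bdd_above {Xdist \<mu> s u |s u. s \<in> S \<and> u \<in> S}"
  proof (rule bdd_aboveI[of _ 2])
    fix v assume "v \<in> {Xdist \<mu> s u |s u. s \<in> S \<and> u \<in> S}"
    then obtain s u where v: "v = Xdist \<mu> s u" and "s \<in> Xball \<mu>" "u \<in> Xball \<mu>"
      using assms(1) by blast
    then have s: "s \<in> Xspace \<mu>" "Xnorm \<mu> s \<le> 1" and u: "u \<in> Xspace \<mu>" "Xnorm \<mu> u \<le> 1"
      by (simp_all add: Xball_def)
    have z: "(\<lambda>k i. 0) \<in> Xspace \<mu>"
      using Xball_zero by (simp add: Xball_def)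
    have "Xnorm \<mu> (\<lambda>k i. s k i - u k i) \<le> Xnorm \<mu> (\<lambda>k i. s k i - 0) + Xnorm \<mu> (\<lambda>k i. 0 - u k i)"
      by (rule Xnorm_triangle_diff[OF s(1) z u(1)])
    also have "Xnorm \<mu> (\<lambda>k i. 0 - u k i) = Xnorm \<mu> (\<lambda>k i. u k i - 0)"
      by (rule Xnorm_minus_commute[OF z u(1)])
    finally have "v \<le> Xnorm \<mu> s + Xnorm \<mu> u"
      by (simp add: v Xdist_def)
    then show "v \<le> 2"
      using s(2) u(2) by linarith
  qed
qed

lemma Xdiam_le:
  assumes "S \<noteq> {}" "\<And>s u. s \<in> S \<Longrightarrow> u \<in> S \<Longrightarrow> Xdist \<mu> s u \<le> \<epsilon>"
  shows "Xdiam \<mu> S \<le> \<epsilon>"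
  unfolding Xdiam_def
proof (rule cSup_least)
  show "{Xdist \<mu> s u |s u. s \<in> S \<and> u \<in> S} \<noteq> {}"
    using assms(1) by blast
qed (use assms(2) in blast)

lemma X_linear_add:
  "X_linear \<mu> F \<Longrightarrow> s \<in> Xspace \<mu> \<Longrightarrow> t \<in> Xspace \<mu> \<Longrightarrow> F (\<lambda>k i. s k i + t k i) = F s + F t"
  by (simp add: X_linear_def)

lemma X_linear_scale: "X_linear \<mu> F \<Longrightarrow> s \<in> Xspace \<mu> \<Longrightarrow> F (\<lambda>k i. c * s k i) = c * F s"
  by (simp add: X_linear_def)

lemma X_linear_diff:
  assumes "X_linear \<mu> F" "s \<in> Xspace \<mu>" "t \<in> Xspace \<mu>"
  shows "F (\<lambda>k i. s k i - t k i) = F s - F t"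
  using X_linear_add[OF assms(1,2) Xspace_scale[OF assms(3)], of "-1"] X_linear_scale[OF assms(1,3), of "-1"]
  by simp

lemma X_linear_zero: "X_linear \<mu> F \<Longrightarrow> F (\<lambda>k i. 0) = 0"
  using X_linear_scale[of F "\<lambda>k i. 0" 0] Xspace_const[OF c00_zero] by simp

lemma X_linear_const_sum:
  assumes F: "X_linear \<mu> F"
  shows "F (\<lambda>k i. \<Sum>n\<in>S. c n * cbasis n i) = (\<Sum>n\<in>S. c n * F (\<lambda>k. cbasis n))"
proof (induction S rule: infinite_finite_induct)
  case (insert m S)
  have "F (\<lambda>k i. \<Sum>n\<in>insert m S. c n * cbasis n i)
      = F (\<lambda>k i. c m * cbasis m i + (\<Sum>n\<in>S. c n * cbasis n i))"
    using insert.hyps by simp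
  also have "\<dots> = F (\<lambda>k i. c m * cbasis m i) + F (\<lambda>k i. \<Sum>n\<in>S. c n * cbasis n i)"
    by (intro X_linear_add[OF F] Xspace_const c00_sum c00_scale cbasis_in_c00)
  also have "F (\<lambda>k i. c m * cbasis m i) = c m * F (\<lambda>k. cbasis m)"
    by (rule X_linear_scale[OF F Xspace_const[OF cbasis_in_c00]])
  finally show ?case
    using insert by simp
qed (simp_all add: X_linear_zero[OF F])

lemma X_linear_const_emb:
  assumes "X_linear \<mu> F"
  shows "F (\<lambda>k. emb a) = (\<Sum>n\<in>{n. Rep_V a n \<noteq> 0}. real_of_rat (Rep_V a n) * F (\<lambda>k. cbasis n))"
  by (subst emb_eq_sum_cbasis) (rule X_linear_const_sum[OF assms])

lemma X_contraction_diff: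
  assumes "X_linear \<mu> F" "X_contraction \<mu> F" "s \<in> Xspace \<mu>" "t \<in> Xspace \<mu>"
  shows "\<bar>F s - F t\<bar> \<le> Xnorm \<mu> (\<lambda>k i. s k i - t k i)"
  using assms Xspace_diff[OF assms(3,4)] by (simp add: X_contraction_def flip: X_linear_diff)

lemma X_contraction_const: "X_contraction \<mu> F \<Longrightarrow> x \<in> c00 \<Longrightarrow> \<bar>F (\<lambda>k. x)\<bar> \<le> mubar \<mu> x"
  unfolding X_contraction_def using Xspace_const Xnorm_const by metis

lemma is_Xfunctional_if_X_contraction:
  "X_linear \<mu> F \<Longrightarrow> X_contraction \<mu> F \<Longrightarrow> is_Xfunctional \<mu> F"
  unfolding is_Xfunctional_def X_linear_def X_contraction_def by (auto intro!: exI[of _ 1])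

lemma bdd_above_abs_Xball:
  assumes "\<forall>s\<in>Xspace \<mu>. \<bar>F s\<bar> \<le> C * Xnorm \<mu> s"
  shows "bdd_above {\<bar>F s\<bar> | s. s \<in> Xball \<mu>}"
proof (rule bdd_aboveI[of _ "\<bar>C\<bar>"])
  fix v assume "v \<in> {\<bar>F s\<bar> | s. s \<in> Xball \<mu>}"
  then obtain s where s: "v = \<bar>F s\<bar>" "s \<in> Xspace \<mu>" "Xnorm \<mu> s \<le> 1"
    by (auto simp: Xball_def)
  have "C * Xnorm \<mu> s \<le> \<bar>C\<bar> * Xnorm \<mu> s"
    using Xnorm_nonneg[OF s(2)] by (intro mult_right_mono) auto
  also have "\<dots> \<le> \<bar>C\<bar>"
    using s(3) mult_left_mono[OF s(3), of "\<bar>C\<bar>"] by simp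
  finally show "v \<le> \<bar>C\<bar>"
    using assms s by force
qed

lemma X_linear_if_is_Xfunctional: "is_Xfunctional \<mu> F \<Longrightarrow> X_linear \<mu> F"
  by (simp add: is_Xfunctional_def X_linear_def)

lemma abs_le_dualnorm: "is_Xfunctional \<mu> F \<Longrightarrow> s \<in> Xball \<mu> \<Longrightarrow> \<bar>F s\<bar> \<le> dualnorm \<mu> F"
  unfolding dualnorm_def is_Xfunctional_def by (auto intro!: cSup_upper bdd_above_abs_Xball)

lemma abs_le_dualnorm_Xnorm:
  assumes F: "is_Xfunctional \<mu> F" and s: "s \<in> Xspace \<mu>"
  shows "\<bar>F s\<bar> \<le> dualnorm \<mu> F * Xnorm \<mu> s"
proof (cases "Xnorm \<mu> s = 0")
  case True
  obtain C where "\<forall>s\<in>Xspace \<mu>. \<bar>F s\<bar> \<le> C * Xnorm \<mu> s"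
    using F by (auto simp: is_Xfunctional_def)
  then show ?thesis
    using s True by force
next
  case False
  define r where "r = Xnorm \<mu> s"
  have "r > 0"
    using False Xnorm_nonneg[OF s] by (simp add: r_def)
  have "(\<lambda>k i. (1 / r) * s k i) \<in> Xball \<mu>"
    using Xspace_scale[OF s, of "1 / r"] Xnorm_scale[OF s, of "1 / r"] \<open>r > 0\<close> by (simp add: Xball_def r_def)
  then have "\<bar>F (\<lambda>k i. (1 / r) * s k i)\<bar> \<le> dualnorm \<mu> F"
    by (rule abs_le_dualnorm[OF F])
  moreover have "F (\<lambda>k i. (1 / r) * s k i) = (1 / r) * F s"
    by (rule X_linear_scale[OF X_linear_if_is_Xfunctional[OF F] s])
  ultimately have "\<bar>F s\<bar> / r \<le> dualnorm \<mu> F"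
    using \<open>r > 0\<close> by (simp add: abs_mult)
  then show ?thesis
    using \<open>r > 0\<close> by (simp add: r_def divide_le_eq)
qed

lemma X_contraction_if_dualnorm_eq_1:
  assumes "is_Xfunctional \<mu> F" "dualnorm \<mu> F = 1"
  shows "X_contraction \<mu> F"
  using abs_le_dualnorm_Xnorm[OF assms(1)] assms(2) by (simp add: X_contraction_def)

lemma dualnorm_le_1:
  assumes "X_contraction \<mu> F"
  shows "dualnorm \<mu> F \<le> 1"
  unfolding dualnorm_def
proof (rule cSup_least)
  show "{\<bar>F s\<bar> |s. s \<in> Xball \<mu>} \<noteq> {}"
    using Xball_zero by blast
  fix v assume "v \<in> {\<bar>F s\<bar> |s. s \<in> Xball \<mu>}"
  then obtain s where "v = \<bar>F s\<bar>" "s \<in> Xspace \<mu>" "Xnorm \<mu> s \<le> 1"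
    by (auto simp: Xball_def)
  then show "v \<le> 1"
    using assms by (force simp: X_contraction_def)
qed

lemma exists_Xball_gt:
  assumes F: "is_Xfunctional \<mu> F" and "dualnorm \<mu> F = 1" "\<delta> > 0"
  obtains s where "s \<in> Xball \<mu>" "F s > 1 - \<delta>"
proof -
  have "\<exists>s\<in>Xball \<mu>. \<bar>F s\<bar> > 1 - \<delta>"
  proof (rule ccontr)
    assume "\<not> ?thesis"
    then have "dualnorm \<mu> F \<le> 1 - \<delta>"
      unfolding dualnorm_def using Xball_zero by (intro cSup_least) (auto simp: not_less)
    then show False
      using assms by simp
  qed
  then obtain s where s: "s \<in> Xball \<mu>" "\<bar>F s\<bar> > 1 - \<delta>"
    by blast
  then have s': "s \<in> Xspace \<mu>" "Xnorm \<mu> s \<le> 1"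
    by (simp_all add: Xball_def)
  show ?thesis
  proof (cases "F s \<ge> 0")
    case True
    then show ?thesis
      using that s by simp
  next
    case False
    have "(\<lambda>k i. -1 * s k i) \<in> Xball \<mu>"
      using Xspace_scale[OF s'(1), of "-1"] Xnorm_scale[OF s'(1), of "-1"] s'(2) by (simp add: Xball_def)
    moreover have "F (\<lambda>k i. -1 * s k i) = - F s"
      using X_linear_scale[OF X_linear_if_is_Xfunctional[OF F] s'(1), of "-1"] by simp
    ultimately show ?thesis
      using that s False by auto
  qed
qed

lemma dualnorm_normalize:
  assumes lin: "X_linear \<mu> F" and contr: "X_contraction \<mu> F" and d: "dualnorm \<mu> F > 0"
  shows "is_Xfunctional \<mu> (\<lambda>s. F s / dualnorm \<mu> F)" "dualnorm \<mu> (\<lambda>s. F s / dualnorm \<mu> F) = 1"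
proof -
  let ?d = "dualnorm \<mu> F"
  have bound: "\<bar>F s / ?d\<bar> \<le> (1 / ?d) * Xnorm \<mu> s" if "s \<in> Xspace \<mu>" for s
    using contr that d by (simp add: X_contraction_def abs_divide divide_right_mono)
  show "is_Xfunctional \<mu> (\<lambda>s. F s / ?d)"
    unfolding is_Xfunctional_def
  proof (intro conjI)
    show "\<exists>C. \<forall>s\<in>Xspace \<mu>. \<bar>F s / ?d\<bar> \<le> C * Xnorm \<mu> s"
      using bound by blast
  qed (use lin in \<open>auto simp: X_linear_def add_divide_distrib\<close>)
  define B where "B = {\<bar>F s\<bar> | s. s \<in> Xball \<mu>}"
  have "B \<noteq> {}" "bdd_above B"
    using Xball_zero contr by (auto simp: B_def X_contraction_def intro!: bdd_above_abs_Xball[of _ 1])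
  then have "Sup B / ?d = Sup ((\<lambda>v. v / ?d) ` B)"
    using d by (intro continuous_at_Sup_mono) (auto simp: mono_def divide_right_mono intro!: continuous_intros)
  moreover have "(\<lambda>v. v / ?d) ` B = {\<bar>F s / ?d\<bar> | s. s \<in> Xball \<mu>}"
    using d by (auto simp: B_def abs_divide)
  ultimately show "dualnorm \<mu> (\<lambda>s. F s / ?d) = 1"
    using d by (simp add: dualnorm_def B_def)
qed

end

section \<open>Functionals parametrised by the unit cube\<close>

definition coord_functional :: "(V \<Rightarrow> real) \<Rightarrow> (nat \<Rightarrow> real) \<Rightarrow> (nat \<Rightarrow> real) \<Rightarrow> real" where
  "coord_functional \<mu> t x = (\<Sum>n\<in>{n. x n \<noteq> 0}. x n * t n * \<mu> (vbasis n))"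

definition coord_dominated :: "(V \<Rightarrow> real) \<Rightarrow> (nat \<Rightarrow> real) \<Rightarrow> bool" where
  "coord_dominated \<mu> t \<longleftrightarrow> (\<forall>n. t n \<in> {-1..1}) \<and> (\<forall>a. \<bar>coord_functional \<mu> t (emb a)\<bar> \<le> \<mu> a)"

definition coord_functional_X :: "(V \<Rightarrow> real) \<Rightarrow> (nat \<Rightarrow> real) \<Rightarrow> (nat \<Rightarrow> nat \<Rightarrow> real) \<Rightarrow> real" where
  "coord_functional_X \<mu> t s = lim (\<lambda>k. coord_functional \<mu> t (s k))"

lemma coord_functional_eq_sum:
  "finite S \<Longrightarrow> {n. x n \<noteq> 0} \<subseteq> S \<Longrightarrow> coord_functional \<mu> t x = (\<Sum>n\<in>S. x n * t n * \<mu> (vbasis n))"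
  unfolding coord_functional_def by (rule sum.mono_neutral_left) auto

lemma coord_functional_add:
  assumes "x \<in> c00" "y \<in> c00"
  shows "coord_functional \<mu> t (\<lambda>n. x n + y n) = coord_functional \<mu> t x + coord_functional \<mu> t y"
proof -
  define S where "S = {n. x n \<noteq> 0} \<union> {n. y n \<noteq> 0}"
  have S: "finite S"
    using assms by (simp add: S_def c00_def)
  have "coord_functional \<mu> t (\<lambda>n. x n + y n) = (\<Sum>n\<in>S. (x n + y n) * t n * \<mu> (vbasis n))"
    by (rule coord_functional_eq_sum[OF S]) (auto simp: S_def)
  also have "\<dots> = coord_functional \<mu> t x + coord_functional \<mu> t y"
    by (simp add: coord_functional_eq_sum[OF S] S_def distrib_right sum.distrib)
  finally show ?thesis .
qed

lemma coord_functional_scale: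
  assumes "x \<in> c00"
  shows "coord_functional \<mu> t (\<lambda>n. c * x n) = c * coord_functional \<mu> t x"
proof -
  have S: "finite {n. x n \<noteq> 0}"
    using assms by (simp add: c00_def)
  have "coord_functional \<mu> t (\<lambda>n. c * x n) = (\<Sum>n\<in>{n. x n \<noteq> 0}. (c * x n) * t n * \<mu> (vbasis n))"
    by (rule coord_functional_eq_sum[OF S]) auto
  also have "\<dots> = c * coord_functional \<mu> t x"
    by (simp add: coord_functional_def sum_distrib_left mult.assoc)
  finally show ?thesis .
qed

lemma coord_functional_diff:
  assumes "x \<in> c00" "y \<in> c00"
  shows "coord_functional \<mu> t (\<lambda>n. x n - y n) = coord_functional \<mu> t x - coord_functional \<mu> t y"
  using coord_functional_add[OF assms(1) c00_scale[OF assms(2), of "-1"]] coord_functional_scale[OF assms(2), of _ _ "-1"]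
  by simp

context V_seminorm
begin

lemma abs_coord_functional_le_wnorm:
  assumes "\<forall>n. t n \<in> {-1..1}"
  shows "\<bar>coord_functional \<mu> t x\<bar> \<le> wnorm \<mu> x"
  unfolding coord_functional_def wnorm_def
proof (rule order.trans[OF sum_abs sum_mono])
  fix n
  have "\<bar>t n\<bar> \<le> 1"
    using assms[rule_format, of n] by (simp add: abs_le_iff)
  then have "\<bar>t n\<bar> * \<mu> (vbasis n) \<le> \<mu> (vbasis n)"
    using nonneg[of "vbasis n"] by (simp add: mult_left_le_one_le)
  then show "\<bar>x n * t n * \<mu> (vbasis n)\<bar> \<le> \<bar>x n\<bar> * \<mu> (vbasis n)"
    using nonneg[of "vbasis n"] by (simp add: abs_mult mult.assoc mult_left_mono)
qed

lemma abs_coord_functional_le_mubar: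
  assumes dom: "coord_dominated \<mu> t" and x: "x \<in> c00"
  shows "\<bar>coord_functional \<mu> t x\<bar> \<le> mubar \<mu> x"
proof (rule field_le_epsilon)
  fix e :: real assume "0 < e"
  then obtain a where a: "wnorm \<mu> (\<lambda>n. x n - emb a n) < e / 2"
    using exists_wnorm_diff_emb_less[OF x, of "e / 2"] by auto
  have "\<bar>coord_functional \<mu> t (\<lambda>n. x n - emb a n)\<bar> \<le> wnorm \<mu> (\<lambda>n. x n - emb a n)"
    using dom by (intro abs_coord_functional_le_wnorm) (simp add: coord_dominated_def)
  moreover have "coord_functional \<mu> t (\<lambda>n. x n - emb a n) = coord_functional \<mu> t x - coord_functional \<mu> t (emb a)"
    using x by (simp add: coord_functional_diff emb_in_c00)
  moreover have "\<bar>mubar \<mu> x - \<mu> a\<bar> \<le> wnorm \<mu> (\<lambda>n. x n - emb a n)"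
    using x by (rule abs_mubar_diff_le_wnorm)
  moreover have "\<bar>coord_functional \<mu> t (emb a)\<bar> \<le> \<mu> a"
    using dom by (simp add: coord_dominated_def)
  ultimately show "\<bar>coord_functional \<mu> t x\<bar> \<le> mubar \<mu> x + e"
    using a by linarith
qed

lemma coord_functional_X_LIMSEQ:
  assumes dom: "coord_dominated \<mu> t" and s: "s \<in> Xspace \<mu>"
  shows "(\<lambda>k. coord_functional \<mu> t (s k)) \<longlonglongrightarrow> coord_functional_X \<mu> t s"
proof -
  have "convergent (\<lambda>k. coord_functional \<mu> t (s k))"
    using s by (rule Xspace_convergent)
      (simp add: abs_coord_functional_le_mubar[OF dom] c00_diff flip: coord_functional_diff)
  then show ?thesis
    by (simp add: coord_functional_X_def convergent_LIMSEQ_iff)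
qed

lemma coord_functional_X_const: "coord_functional_X \<mu> t (\<lambda>k. x) = coord_functional \<mu> t x"
  by (simp add: coord_functional_X_def)

lemma X_linear_coord_functional_X:
  assumes dom: "coord_dominated \<mu> t"
  shows "X_linear \<mu> (coord_functional_X \<mu> t)"
  unfolding X_linear_def
proof (intro conjI ballI allI)
  fix s u assume s: "s \<in> Xspace \<mu>" and u: "u \<in> Xspace \<mu>"
  have "(\<lambda>k. coord_functional \<mu> t (s k) + coord_functional \<mu> t (u k))
      \<longlonglongrightarrow> coord_functional_X \<mu> t (\<lambda>k i. s k i + u k i)"
    using coord_functional_X_LIMSEQ[OF dom Xspace_add[OF s u]] Xspace_c00[OF s] Xspace_c00[OF u]
    by (simp add: coord_functional_add)
  then show "coord_functional_X \<mu> t (\<lambda>k i. s k i + u k i) = coord_functional_X \<mu> t s + coord_functional_X \<mu> t u"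
    using tendsto_add[OF coord_functional_X_LIMSEQ[OF dom s] coord_functional_X_LIMSEQ[OF dom u]]
    by (rule LIMSEQ_unique)
next
  fix c s assume s: "s \<in> Xspace \<mu>"
  have "(\<lambda>k. c * coord_functional \<mu> t (s k)) \<longlonglongrightarrow> coord_functional_X \<mu> t (\<lambda>k i. c * s k i)"
    using coord_functional_X_LIMSEQ[OF dom Xspace_scale[OF s]] Xspace_c00[OF s]
    by (simp add: coord_functional_scale)
  then show "coord_functional_X \<mu> t (\<lambda>k i. c * s k i) = c * coord_functional_X \<mu> t s"
    using tendsto_mult_left[OF coord_functional_X_LIMSEQ[OF dom s]]
    by (rule LIMSEQ_unique)
qed

lemma X_contraction_coord_functional_X:
  assumes dom: "coord_dominated \<mu> t"
  shows "X_contraction \<mu> (coord_functional_X \<mu> t)"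
  unfolding X_contraction_def
proof
  fix s assume s: "s \<in> Xspace \<mu>"
  show "\<bar>coord_functional_X \<mu> t s\<bar> \<le> Xnorm \<mu> s"
    using Xspace_c00[OF s] abs_coord_functional_le_mubar[OF dom]
    by (intro LIMSEQ_le[OF tendsto_rabs[OF coord_functional_X_LIMSEQ[OF dom s]] Xnorm_LIMSEQ[OF s]]) auto
qed

lemma X_contraction_eq_coord_functional:
  assumes lin: "X_linear \<mu> F" and contr: "X_contraction \<mu> F"
  obtains t where "coord_dominated \<mu> t" "\<And>a. F (\<lambda>k. emb a) = coord_functional \<mu> t (emb a)"
proof -
  define h where "h n = F (\<lambda>k. cbasis n)" for n
  define t where "t n = (if \<mu> (vbasis n) = 0 then 0 else h n / \<mu> (vbasis n))" for n
  have h: "\<bar>h n\<bar> \<le> \<mu> (vbasis n)" for n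
    using X_contraction_const[OF contr cbasis_in_c00, of n] by (simp add: h_def mubar_cbasis)
  have th: "t n * \<mu> (vbasis n) = h n" for n
    using h[of n] by (auto simp: t_def)
  have t: "t n \<in> {-1..1}" for n
    using h[of n] nonneg[of "vbasis n"] by (auto simp: t_def divide_le_eq le_divide_eq)
  have F_emb: "F (\<lambda>k. emb a) = coord_functional \<mu> t (emb a)" for a
    using X_linear_const_emb[OF lin, of a] th
    by (simp add: coord_functional_def support_emb h_def emb_def mult.assoc)
  have "\<bar>coord_functional \<mu> t (emb a)\<bar> \<le> \<mu> a" for a
    using X_contraction_const[OF contr emb_in_c00, of a] by (simp add: mubar_emb flip: F_emb)
  with t have "coord_dominated \<mu> t"
    by (simp add: coord_dominated_def)
  then show ?thesis
    using F_emb by (rule that)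
qed

lemma exists_emb_near_in_slice:
  assumes lin: "X_linear \<mu> F" and contr: "X_contraction \<mu> F" and s: "s \<in> Xball \<mu>"
    and "\<beta> < F s" and "\<eta> > 0"
  shows "\<exists>a. \<mu> a < 1 \<and> \<beta> < F (\<lambda>k. emb a) \<and> Xnorm \<mu> (\<lambda>k i. s k i - emb a i) < \<eta>"
proof -
  have sX: "s \<in> Xspace \<mu>" and s1: "Xnorm \<mu> s \<le> 1"
    using s by (simp_all add: Xball_def)
  have "F s \<le> 1"
    using contr sX s1 by (force simp: X_contraction_def)
  define l where "l = min 1 (min (F s - \<beta>) \<eta>) / 3"
  have l: "0 < l" "3 * l \<le> 1" "3 * l \<le> F s - \<beta>" "3 * l \<le> \<eta>"
    using \<open>\<beta> < F s\<close> \<open>\<eta> > 0\<close> by (simp_all add: l_def min_le_iff_disj)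
  \<comment> \<open>shrink \<open>s\<close> into the open ball before approximating it by a rational vector\<close>
  define s' where "s' = (\<lambda>k i. (1 - l) * s k i)"
  have s'X: "s' \<in> Xspace \<mu>"
    unfolding s'_def by (rule Xspace_scale[OF sX])
  obtain a where a: "Xnorm \<mu> (\<lambda>k i. s' k i - emb a i) < l / 2"
    using exists_emb_Xnorm_diff_less[OF s'X, of "l / 2"] l by auto
  have aX: "(\<lambda>k. emb a) \<in> Xspace \<mu>"
    by (simp add: Xspace_const emb_in_c00)
  have "Xnorm \<mu> s' = Xnorm \<mu> s - l * Xnorm \<mu> s" "F s' = F s - l * F s"
    using Xnorm_scale[OF sX, of "1 - l"] X_linear_scale[OF lin sX, of "1 - l"] l
    by (simp_all add: s'_def left_diff_distrib)
  moreover have "l * F s \<le> l" "Xnorm \<mu> s - l * Xnorm \<mu> s \<le> 1 - l"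
    using \<open>F s \<le> 1\<close> mult_left_mono[OF s1, of "1 - l"] l by (simp_all add: mult_left_le algebra_simps)
  moreover have "Xnorm \<mu> (\<lambda>k i. s k i - s' k i) = l * Xnorm \<mu> s"
    using Xnorm_scale[OF sX, of l] l by (simp add: s'_def algebra_simps)
  moreover have "l * Xnorm \<mu> s \<le> l"
    using s1 l by (simp add: mult_left_le)
  moreover have "\<mu> a \<le> Xnorm \<mu> (\<lambda>k i. s' k i - emb a i) + Xnorm \<mu> s'"
    using Xnorm_le_diff_add[OF aX s'X] Xnorm_minus_commute[OF aX s'X] by (simp add: Xnorm_const mubar_emb)
  moreover have "F s' - F (\<lambda>k. emb a) \<le> Xnorm \<mu> (\<lambda>k i. s' k i - emb a i)"
    using X_contraction_diff[OF lin contr s'X aX] by simp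
  moreover have "Xnorm \<mu> (\<lambda>k i. s k i - emb a i)
      \<le> Xnorm \<mu> (\<lambda>k i. s k i - s' k i) + Xnorm \<mu> (\<lambda>k i. s' k i - emb a i)"
    by (rule Xnorm_triangle_diff[OF sX s'X aX])
  ultimately show ?thesis
    using a l by (intro exI[of _ a] conjI) linarith+
qed

lemma Xdist_le_if_emb_slice_small:
  assumes lin: "X_linear \<mu> F" and contr: "X_contraction \<mu> F"
    and small: "\<And>a b. \<mu> a < 1 \<Longrightarrow> \<mu> b < 1 \<Longrightarrow> c < F (\<lambda>k. emb a) \<Longrightarrow> c < F (\<lambda>k. emb b) \<Longrightarrow>
      \<mu> (vminus a b) \<le> \<epsilon>"
    and s: "s \<in> Xball \<mu>" "c < F s" and u: "u \<in> Xball \<mu>" "c < F u"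
  shows "Xdist \<mu> s u \<le> \<epsilon>"
proof (rule field_le_epsilon)
  fix e :: real assume "0 < e"
  obtain a where a: "\<mu> a < 1" "c < F (\<lambda>k. emb a)" "Xnorm \<mu> (\<lambda>k i. s k i - emb a i) < e / 2"
    using exists_emb_near_in_slice[OF lin contr s, of "e / 2"] \<open>0 < e\<close> by auto
  obtain b where b: "\<mu> b < 1" "c < F (\<lambda>k. emb b)" "Xnorm \<mu> (\<lambda>k i. u k i - emb b i) < e / 2"
    using exists_emb_near_in_slice[OF lin contr u, of "e / 2"] \<open>0 < e\<close> by auto
  have X: "s \<in> Xspace \<mu>" "u \<in> Xspace \<mu>" "(\<lambda>k. emb a) \<in> Xspace \<mu>" "(\<lambda>k. emb b) \<in> Xspace \<mu>"
    using s u by (simp_all add: Xball_def Xspace_const emb_in_c00)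
  have "Xdist \<mu> s u \<le> Xnorm \<mu> (\<lambda>k i. s k i - emb a i) + Xnorm \<mu> (\<lambda>k i. emb a i - u k i)"
    unfolding Xdist_def using Xnorm_triangle_diff[OF X(1,3,2)] by simp
  also have "Xnorm \<mu> (\<lambda>k i. emb a i - u k i) \<le> Xdist \<mu> (\<lambda>k. emb a) (\<lambda>k. emb b) + Xnorm \<mu> (\<lambda>k i. u k i - emb b i)"
    using Xnorm_triangle_diff[OF X(3,4,2)] Xnorm_minus_commute[OF X(4,2)] by (simp add: Xdist_def)
  also have "Xdist \<mu> (\<lambda>k. emb a) (\<lambda>k. emb b) \<le> \<epsilon>"
    using small[OF a(1) b(1) a(2) b(2)] by (simp add: Xdist_const_emb)
  finally show "Xdist \<mu> s u \<le> \<epsilon> + e"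
    using a(3) b(3) by linarith
qed

end

section \<open>Dentability through rational slices\<close>

definition slice_witness :: "real \<Rightarrow> real \<Rightarrow> V \<Rightarrow> (V \<Rightarrow> real) \<Rightarrow> (nat \<Rightarrow> real) \<Rightarrow> bool" where
  "slice_witness \<epsilon> \<alpha> a0 \<mu> t \<longleftrightarrow>
     coord_dominated \<mu> t \<and> \<mu> a0 \<le> 1 \<and> 1 - \<alpha> / 4 \<le> coord_functional \<mu> t (emb a0) \<and>
     (\<forall>a b. \<mu> a < 1 \<longrightarrow> \<mu> b < 1 \<longrightarrow> 1 - \<alpha> < coord_functional \<mu> t (emb a) \<longrightarrow>
        1 - \<alpha> < coord_functional \<mu> t (emb b) \<longrightarrow> \<mu> (vminus a b) \<le> \<epsilon>)"

context V_seminorm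
begin

lemma small_slice_if_slice_witness:
  assumes w: "slice_witness \<epsilon> \<alpha> a0 \<mu> t" and \<alpha>: "0 < \<alpha>" "\<alpha> \<le> 1 / 2"
  shows "\<exists>F \<beta>. is_Xfunctional \<mu> F \<and> dualnorm \<mu> F = 1 \<and> \<beta> > 0 \<and> Xdiam \<mu> (slice \<mu> F \<beta>) \<le> \<epsilon>"
proof -
  let ?G = "coord_functional_X \<mu> t"
  have dom: "coord_dominated \<mu> t" and a0: "(\<lambda>k. emb a0) \<in> Xball \<mu>"
    and G_a0: "1 - \<alpha> / 4 \<le> ?G (\<lambda>k. emb a0)"
    using w by (simp_all add: slice_witness_def const_emb_in_Xball_iff coord_functional_X_const)
  have lin: "X_linear \<mu> ?G" and contr: "X_contraction \<mu> ?G"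
    using dom by (rule X_linear_coord_functional_X X_contraction_coord_functional_X)+
  have small: "\<mu> (vminus a b) \<le> \<epsilon>"
    if "\<mu> a < 1" "\<mu> b < 1" "1 - \<alpha> < ?G (\<lambda>k. emb a)" "1 - \<alpha> < ?G (\<lambda>k. emb b)" for a b
    using w that by (simp add: slice_witness_def coord_functional_X_const)
  define d where "d = dualnorm \<mu> ?G"
  have "1 - \<alpha> / 4 \<le> d"
    using G_a0 abs_le_dualnorm[OF is_Xfunctional_if_X_contraction[OF lin contr] a0] by (simp add: d_def)
  moreover have "d \<le> 1"
    unfolding d_def by (rule dualnorm_le_1[OF contr])
  ultimately have d: "1 - \<alpha> / 4 \<le> d" "d \<le> 1" "0 < d"
    using \<alpha> by auto
  define F where "F = (\<lambda>s. ?G s / d)"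
  have F: "is_Xfunctional \<mu> F" "dualnorm \<mu> F = 1"
    using dualnorm_normalize[OF lin contr] d by (simp_all add: F_def d_def)
  have G_slice: "1 - \<alpha> < ?G s" if "s \<in> slice \<mu> F (\<alpha> / 2)" for s
  proof -
    have "(1 - \<alpha> / 2) * d < ?G s"
      using that d by (simp add: slice_def F_def less_divide_eq)
    moreover have "(1 - \<alpha> / 2) * (1 - \<alpha> / 4) \<le> (1 - \<alpha> / 2) * d"
      using d \<alpha> by (intro mult_left_mono) auto
    moreover have "(1 - \<alpha> / 2) * (1 - \<alpha> / 4) = 1 - \<alpha> + (\<alpha> / 4 + \<alpha> * \<alpha> / 8)"
      by (simp add: algebra_simps)
    moreover have "0 \<le> \<alpha> * \<alpha>"
      by simp
    ultimately show ?thesis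
      using \<alpha> by linarith
  qed
  have "(\<lambda>k. emb a0) \<in> slice \<mu> F (\<alpha> / 2)"
  proof -
    have "?G (\<lambda>k. emb a0) \<le> F (\<lambda>k. emb a0)"
      using G_a0 d \<alpha> by (simp add: F_def le_divide_eq mult_left_le)
    then show ?thesis
      using a0 G_a0 \<alpha> by (simp add: slice_def)
  qed
  moreover have "Xdist \<mu> s u \<le> \<epsilon>" if "s \<in> slice \<mu> F (\<alpha> / 2)" "u \<in> slice \<mu> F (\<alpha> / 2)" for s u
    using that G_slice by (intro Xdist_le_if_emb_slice_small[OF lin contr small]) (auto simp: slice_def)
  ultimately have "Xdiam \<mu> (slice \<mu> F (\<alpha> / 2)) \<le> \<epsilon>"
    by (intro Xdiam_le) auto
  then show ?thesis
    using F \<alpha> by (intro exI[of _ F] exI[of _ "\<alpha> / 2"]) auto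
qed

lemma slice_witness_if_small_slice:
  assumes F: "is_Xfunctional \<mu> F" "dualnorm \<mu> F = 1" and \<alpha>: "0 < \<alpha>" "\<alpha> \<le> \<alpha>0"
    and diam: "Xdiam \<mu> (slice \<mu> F \<alpha>0) < \<epsilon>"
  shows "\<exists>a0 t. slice_witness \<epsilon> \<alpha> a0 \<mu> t"
proof -
  have lin: "X_linear \<mu> F" and contr: "X_contraction \<mu> F"
    using F by (simp_all add: X_linear_if_is_Xfunctional X_contraction_if_dualnorm_eq_1)
  obtain t where dom: "coord_dominated \<mu> t" and F_emb: "\<And>a. F (\<lambda>k. emb a) = coord_functional \<mu> t (emb a)"
    using X_contraction_eq_coord_functional[OF lin contr] by blast
  obtain s where "s \<in> Xball \<mu>" "1 - \<alpha> / 4 < F s"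
    using exists_Xball_gt[OF F, of "\<alpha> / 4"] \<alpha> by auto
  then obtain a0 where a0: "\<mu> a0 < 1" "1 - \<alpha> / 4 < F (\<lambda>k. emb a0)"
    using exists_emb_near_in_slice[OF lin contr, of s "1 - \<alpha> / 4" 1] by auto
  have "\<mu> (vminus a b) \<le> \<epsilon>"
    if "\<mu> a < 1" "\<mu> b < 1" "1 - \<alpha> < F (\<lambda>k. emb a)" "1 - \<alpha> < F (\<lambda>k. emb b)" for a b
  proof -
    have "(\<lambda>k. emb a) \<in> slice \<mu> F \<alpha>0" "(\<lambda>k. emb b) \<in> slice \<mu> F \<alpha>0"
      using that \<alpha> by (auto simp: slice_def const_emb_in_Xball_iff)
    then have "Xdist \<mu> (\<lambda>k. emb a) (\<lambda>k. emb b) \<le> Xdiam \<mu> (slice \<mu> F \<alpha>0)"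
      by (intro Xdist_le_Xdiam) (auto simp: slice_def)
    then show ?thesis
      using diam by (simp add: Xdist_const_emb)
  qed
  then show ?thesis
    using dom a0 by (intro exI[of _ a0] exI[of _ t]) (simp add: slice_witness_def F_emb)
qed

lemma ball_dentable_iff_slice_witnesses:
  "ball_dentable \<mu> \<longleftrightarrow>
     (\<forall>i. \<exists>j a0 t. slice_witness (inverse (real (Suc i))) (inverse (real (j + 2))) a0 \<mu> t)"
proof
  assume dent: "ball_dentable \<mu>"
  show "\<forall>i. \<exists>j a0 t. slice_witness (inverse (real (Suc i))) (inverse (real (j + 2))) a0 \<mu> t"
  proof
    fix i
    obtain F \<alpha>0 where F: "is_Xfunctional \<mu> F" "dualnorm \<mu> F = 1" "\<alpha>0 > 0"
      and diam: "Xdiam \<mu> (slice \<mu> F \<alpha>0) < inverse (real (Suc i))"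
      using dent unfolding ball_dentable_def by (meson inverse_positive_iff_positive of_nat_0_less_iff zero_less_Suc)
    obtain j where "inverse (real (Suc j)) < \<alpha>0"
      using reals_Archimedean[OF \<open>\<alpha>0 > 0\<close>] by blast
    moreover have "inverse (real (j + 2)) \<le> inverse (real (Suc j))"
      by (simp add: field_simps)
    ultimately have "inverse (real (j + 2)) \<le> \<alpha>0"
      by linarith
    moreover have "0 < inverse (real (j + 2))"
      by simp
    ultimately show "\<exists>j a0 t. slice_witness (inverse (real (Suc i))) (inverse (real (j + 2))) a0 \<mu> t"
      using slice_witness_if_small_slice[OF F(1,2) _ _ diam] by blast
  qed
next
  assume w: "\<forall>i. \<exists>j a0 t. slice_witness (inverse (real (Suc i))) (inverse (real (j + 2))) a0 \<mu> t"
  show "ball_dentable \<mu>"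
    unfolding ball_dentable_def
  proof (intro allI impI)
    fix \<epsilon> :: real assume "\<epsilon> > 0"
    obtain i where i: "inverse (real (Suc i)) < \<epsilon>"
      using reals_Archimedean[OF \<open>\<epsilon> > 0\<close>] by blast
    obtain j a0 t where "slice_witness (inverse (real (Suc i))) (inverse (real (j + 2))) a0 \<mu> t"
      using w by blast
    moreover have "0 < inverse (real (j + 2))" "inverse (real (j + 2)) \<le> 1 / 2"
      by (simp_all add: field_simps)
    ultimately obtain F \<beta> where "is_Xfunctional \<mu> F" "dualnorm \<mu> F = 1" "\<beta> > 0"
      "Xdiam \<mu> (slice \<mu> F \<beta>) \<le> inverse (real (Suc i))"
      using small_slice_if_slice_witness by blast
    then show "\<exists>F \<alpha>. is_Xfunctional \<mu> F \<and> dualnorm \<mu> F = 1 \<and> \<alpha> > 0 \<and> Xdiam \<mu> (slice \<mu> F \<alpha>) < \<epsilon>"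
      using i by force
  qed
qed

end

section \<open>Closedness of the slice conditions\<close>

lemma closedin_Collect_conj:
  assumes "closedin X {x \<in> topspace X. P x}" "closedin X {x \<in> topspace X. Q x}"
  shows "closedin X {x \<in> topspace X. P x \<and> Q x}"
proof -
  have "{x \<in> topspace X. P x \<and> Q x} = {x \<in> topspace X. P x} \<inter> {x \<in> topspace X. Q x}"
    by auto
  then show ?thesis
    using assms by (simp add: closedin_Int)
qed

lemma closedin_Collect_disj:
  assumes "closedin X {x \<in> topspace X. P x}" "closedin X {x \<in> topspace X. Q x}"
  shows "closedin X {x \<in> topspace X. P x \<or> Q x}"
proof -
  have "{x \<in> topspace X. P x \<or> Q x} = {x \<in> topspace X. P x} \<union> {x \<in> topspace X. Q x}"
    by auto
  then show ?thesis
    using assms by (simp add: closedin_Un)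
qed

lemma closedin_Collect_all:
  "(\<And>i. closedin X {x \<in> topspace X. P i x}) \<Longrightarrow> closedin X {x \<in> topspace X. \<forall>i. P i x}"
proof -
  assume "\<And>i. closedin X {x \<in> topspace X. P i x}"
  then have "closedin X (topspace X \<inter> (\<Inter>i. {x \<in> topspace X. P i x}))"
    by (intro closedin_Int closedin_topspace closedin_Inter) auto
  moreover have "topspace X \<inter> (\<Inter>i. {x \<in> topspace X. P i x}) = {x \<in> topspace X. \<forall>i. P i x}"
    by auto
  ultimately show ?thesis
    by simp
qed

lemma closedin_Collect_le:
  "continuous_map X euclideanreal f \<Longrightarrow> continuous_map X euclideanreal g \<Longrightarrow>
    closedin X {x \<in> topspace X. f x \<le> g x}"
  using closedin_continuous_map_preimage[OF continuous_map_diff, of X f g "{..0}"] by simp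

lemma continuous_map_slice_data:
  fixes I :: "(V \<Rightarrow> real) set"
  defines "X \<equiv> prod_topology (top_of_set I) (product_topology (\<lambda>_::nat. top_of_set {-1..1::real}) UNIV)"
  shows "continuous_map X euclideanreal (\<lambda>z. fst z a)"
    and "continuous_map X euclideanreal (\<lambda>z. snd z n)"
    and "continuous_map X euclideanreal (\<lambda>z. coord_functional (fst z) (snd z) (emb a))"
proof -
  show eval: "continuous_map X euclideanreal (\<lambda>z. fst z a)" for a
    unfolding X_def
    by (intro continuous_map_compose[OF continuous_map_fst, unfolded o_def] continuous_map_from_subtopology)
      (metis UNIV_I continuous_map_product_projection euclidean_product_topology)
  show coord: "continuous_map X euclideanreal (\<lambda>z. snd z n)" for n
  proof -
    let ?Y = "product_topology (\<lambda>_::nat. top_of_set {-1..1::real}) UNIV"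
    have "continuous_map ?Y (top_of_set {-1..1}) (\<lambda>t. t n)"
      by (rule continuous_map_product_projection) simp
    then have "continuous_map ?Y euclideanreal (\<lambda>t. t n)"
      by (rule continuous_map_into_fulltopology)
    then show ?thesis
      unfolding X_def using continuous_map_compose[OF continuous_map_snd] by (simp add: o_def)
  qed
  show "continuous_map X euclideanreal (\<lambda>z. coord_functional (fst z) (snd z) (emb a))"
    unfolding coord_functional_def
    by (intro continuous_map_sum continuous_map_real_mult continuous_map_canonical_const eval coord)
      (simp add: support_emb finite_support_Rep_V)
qed

lemma closedin_slice_witnesses:
  "closedin (top_of_set I) {\<mu> \<in> I. \<exists>t. slice_witness \<epsilon> \<alpha> a0 \<mu> t}"
proof -
  define Y where "Y = product_topology (\<lambda>_::nat. top_of_set {-1..1::real}) UNIV"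
  define X where "X = prod_topology (top_of_set I) Y"
  have "compact_space Y"
    unfolding Y_def by (simp add: compact_space_product_topology compact_space_subtopology)
  have topX: "topspace X = I \<times> {t. \<forall>n. t n \<in> {-1..1}}"
    by (auto simp: X_def Y_def)
  define Z where "Z = {z \<in> topspace X. slice_witness \<epsilon> \<alpha> a0 (fst z) (snd z)}"
  have "closedin X Z"
    unfolding Z_def slice_witness_def coord_dominated_def atLeastAtMost_iff imp_conv_disj not_less
    by (intro closedin_Collect_conj closedin_Collect_disj closedin_Collect_all closedin_Collect_le
        continuous_map_real_abs continuous_map_canonical_const continuous_map_slice_data[of I, folded Y_def X_def])
  then have "closedin (top_of_set I) (fst ` Z)"
    using closed_map_fst[OF \<open>compact_space Y\<close>, of "top_of_set I"] by (simp add: X_def closed_map_def)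
  moreover have "fst ` Z = {\<mu> \<in> I. \<exists>t. slice_witness \<epsilon> \<alpha> a0 \<mu> t}"
  proof (intro equalityI subsetI)
    fix \<mu> assume "\<mu> \<in> {\<mu> \<in> I. \<exists>t. slice_witness \<epsilon> \<alpha> a0 \<mu> t}"
    then obtain t where "\<mu> \<in> I" "slice_witness \<epsilon> \<alpha> a0 \<mu> t"
      by blast
    then have "(\<mu>, t) \<in> Z"
      by (simp add: Z_def topX slice_witness_def coord_dominated_def)
    then show "\<mu> \<in> fst ` Z"
      by (metis fst_conv image_eqI)
  qed (auto simp: Z_def topX)
  ultimately show ?thesis
    by simp
qed

instance V :: countable
proof
  define N where "N a = Suc (Max {n. Rep_V a n \<noteq> 0})" for a
  have zero: "Rep_V a n = 0" if "N a \<le> n" for a n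
    using that Max_ge[OF finite_support_Rep_V, of n a] by (force simp: N_def)
  have "inj (\<lambda>a. map (Rep_V a) [0..<N a])"
  proof (rule injI)
    fix a b assume eq: "map (Rep_V a) [0..<N a] = map (Rep_V b) [0..<N b]"
    then have "N a = N b"
      by (metis diff_zero length_map length_upt)
    have "Rep_V a n = Rep_V b n" for n
    proof (cases "n < N a")
      case True
      then show ?thesis
        using arg_cong[OF eq, of "\<lambda>xs. xs ! n"] \<open>N a = N b\<close> by simp
    next
      case False
      then show ?thesis
        using zero[of a n] zero[of b n] \<open>N a = N b\<close> by simp
    qed
    then show "a = b"
      by (simp add: Rep_V_inject[symmetric] fun_eq_iff)
  qed
  then show "\<exists>to_nat :: V \<Rightarrow> nat. inj to_nat"
    by (metis inj_compose inj_to_nat)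
qed

theorem corollary5p4:
  fixes I :: "(V \<Rightarrow> real) set"
  assumes "I = Pset \<or> I = Pinf \<or> I = Bset"
  shows "Fsigma_delta_in (top_of_set I) {\<mu> \<in> I. ball_dentable \<mu>}"
proof -
  define S where "S i j a0 = {\<mu> \<in> I. \<exists>t. slice_witness (inverse (real (Suc i))) (inverse (real (j + 2))) a0 \<mu> t}"
    for i j a0
  define W where "W i k = S i (fst (from_nat k :: nat \<times> V)) (snd (from_nat k :: nat \<times> V))" for i k
  have "closedin (top_of_set I) (W i k)" for i k
    unfolding W_def S_def by (rule closedin_slice_witnesses)
  moreover have "\<mu> \<in> {\<mu> \<in> I. ball_dentable \<mu>} \<longleftrightarrow> \<mu> \<in> (\<Inter>i. \<Union>k. W i k)" for \<mu>
  proof (cases "\<mu> \<in> I")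
    case True
    then interpret V_seminorm \<mu>
      using assms by unfold_locales (auto simp: Pinf_def Bset_def)
    have "ball_dentable \<mu> \<longleftrightarrow> (\<forall>i. \<exists>j a0. \<mu> \<in> S i j a0)"
      using True by (simp add: ball_dentable_iff_slice_witnesses S_def)
    also have "\<dots> \<longleftrightarrow> (\<forall>i. \<exists>k. \<mu> \<in> W i k)"
      unfolding W_def by (metis from_nat_to_nat fst_conv snd_conv)
    finally show ?thesis
      using True by simp
  qed (simp add: W_def S_def)
  ultimately show ?thesis
    unfolding Fsigma_delta_in_def by blast
qed

end
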